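(* Let $\gamma\in(0,1)$, $\phi(z)=\max\{z,\gamma z\}$, and let $f(x;W)=\sum_{j=1}^m a_j\phi(w_j^\top x)$ with $a_j\in\{\pm1/\sqrt m\}$, where both signs occur. Let $\{(x_i,y_i)\}_{i=1}^n\subseteq\mathbb{R}^d\times\{\pm1\}$ satisfy $R_{\min}^2\ge 3\gamma^{-3}R^2n\max_{i\ne j}|\langle x_i,x_j\rangle|$, where $R_{\max}=\max_i\|x_i\|$, $R_{\min}=\min_i\|x_i\|$, $R=R_{\max}/R_{\min}$. Let $\ell$ be either the exponential loss $\ell(q)=e^{-q}$ or the logistic loss $\ell(q)=\log(1+e^{-q})$, $\hat L(W)=\frac1n\sum_i\ell(y_if(x_i;W))$, and let $W(t)$ be a gradient flow trajectory from an arbitrary initialization $W(0)$. Then there exists a finite time $t_0$ such that $\hat L(W(t))<\log(2)/n$ for all $t\ge t_0$.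
   Context: Gradient flow: $W(t)$ is absolutely continuous with $\frac{dW(t)}{dt}\in-\partial^\circ\hat L(W(t))$ for almost every $t$, where $\partial^\circ$ is the Clarke subdifferential $\partial^\circ f(x)=\mathrm{conv}\{\lim_k\nabla f(x_k): x_k\to x,\ f\text{ differentiable at }x_k\}$. *)

theory Defs
  imports "HOL-Analysis.Analysis"
begin

definition clarke_subdiff :: "('a::euclidean_space \<Rightarrow> real) \<Rightarrow> 'a \<Rightarrow> 'a set" where
  "clarke_subdiff f x = convex hull
     {v. \<exists>xs gs. xs \<longlonglongrightarrow> x \<and>
                 (\<forall>k. (f has_derivative (\<lambda>h. gs k \<bullet> h)) (at (xs k))) \<and>
                 gs \<longlonglongrightarrow> v}"

definition abs_cont_on :: "real \<Rightarrow> real \<Rightarrow> (real \<Rightarrow> 'a::real_normed_vector) \<Rightarrow> bool" where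
  "abs_cont_on s t f \<longleftrightarrow>
     (\<forall>e>0. \<exists>d>0. \<forall>(N::nat) (a::nat \<Rightarrow> real) b.
        (\<forall>k<N. a k \<le> b k \<and> s \<le> a k \<and> b k \<le> t) \<and>
        (\<forall>i<N. \<forall>j<N. i \<noteq> j \<longrightarrow> {a i<..<b i} \<inter> {a j<..<b j} = {}) \<and>
        (\<Sum>k<N. b k - a k) < d
        \<longrightarrow> (\<Sum>k<N. norm (f (b k) - f (a k))) < e)"

definition gradient_flow :: "('a::euclidean_space \<Rightarrow> real) \<Rightarrow> (real \<Rightarrow> 'a) \<Rightarrow> bool" where
  "gradient_flow L W \<longleftrightarrow>
     (\<forall>T\<ge>0. abs_cont_on 0 T W) \<and>
     (AE t in lborel. t \<ge> 0 \<longrightarrow>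
        (\<exists>v. (W has_vector_derivative v) (at t) \<and> - v \<in> clarke_subdiff L (W t)))"

definition leaky :: "real \<Rightarrow> real \<Rightarrow> real" where
  "leaky \<gamma> z = max z (\<gamma> * z)"

definition net :: "real \<Rightarrow> ('m::finite \<Rightarrow> real) \<Rightarrow> real^'d^'m \<Rightarrow> real^'d \<Rightarrow> real" where
  "net \<gamma> a W x = (\<Sum>j\<in>UNIV. a j * leaky \<gamma> ((W $ j) \<bullet> x))"

definition emp_loss :: "(real \<Rightarrow> real) \<Rightarrow> real \<Rightarrow> ('m::finite \<Rightarrow> real)
     \<Rightarrow> ('n::finite \<Rightarrow> real^'d) \<Rightarrow> ('n \<Rightarrow> real) \<Rightarrow> real^'d^'m \<Rightarrow> real" where
  "emp_loss lossf \<gamma> a x y W = (\<Sum>i\<in>UNIV. lossf (y i * net \<gamma> a W (x i))) / real CARD('n)"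

end

theory Submission
  imports Defs
begin

text \<open>Let \<open>F(t) = min\<^sub>i y\<^sub>i f(x\<^sub>i; W(t))\<close> be the minimum margin and \<open>h = -\<ell>'\<close>, which is positive and
  decreasing for both losses. Moving every neuron \<open>j\<close> along \<open>y\<^sub>i a\<^sub>j c\<^sub>j x\<^sub>i\<close>, with \<open>c\<^sub>j \<in> [\<gamma>, 1]\<close> its
  active slope on \<open>x\<^sub>i\<close>, raises the \<open>i\<close>-th margin at rate at least \<open>\<gamma>\<^sup>2 \<parallel>x\<^sub>i\<parallel>\<^sup>2\<close> and changes every other
  margin at rate at most \<open>\<epsilon>\<close>, the largest \<open>|\<langle>x\<^sub>i, x\<^sub>k\<rangle>|\<close> with \<open>i \<noteq> k\<close>. Pairing this direction with a Clarke subgradient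
  shows that at almost every time the minimum margin grows with lower rate \<open>\<kappa> h(F(t))\<close>, where
  \<open>\<kappa> = (\<gamma>\<^sup>2 \<rho>\<^sup>2 - (n - 1) \<epsilon>) / n\<close>, \<open>\<rho> = min\<^sub>i \<parallel>x\<^sub>i\<parallel>\<close>, is positive by the separation hypothesis.
  Since \<open>F\<close> is absolutely continuous, it is nondecreasing and passes \<open>M = ln n - ln (ln 2)\<close> in finite
  time; afterwards every loss term is below \<open>e\<^sup>-\<^sup>M = ln 2 / n\<close>.\<close>

section \<open>Absolute continuity\<close>

lemma abs_cont_onD:
  assumes "abs_cont_on s t f" "e > 0"
  obtains d where "d > 0"
    "\<And>(N::nat) l u. \<forall>k<N. l k \<le> u k \<and> s \<le> l k \<and> u k \<le> t \<Longrightarrow>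
       \<forall>i<N. \<forall>j<N. i \<noteq> j \<longrightarrow> {l i<..<u i} \<inter> {l j<..<u j} = {} \<Longrightarrow>
       (\<Sum>k<N. u k - l k) < d \<Longrightarrow> (\<Sum>k<N. norm (f (u k) - f (l k))) < e"
proof -
  obtain d where "d > 0" and d: "\<forall>(N::nat) l u. (\<forall>k<N. l k \<le> u k \<and> s \<le> l k \<and> u k \<le> t) \<and>
      (\<forall>i<N. \<forall>j<N. i \<noteq> j \<longrightarrow> {l i<..<u i} \<inter> {l j<..<u j} = {}) \<and>
      (\<Sum>k<N. u k - l k) < d \<longrightarrow> (\<Sum>k<N. norm (f (u k) - f (l k))) < e"
    using assms unfolding abs_cont_on_def by blast
  show thesis
    by (rule that[OF \<open>d > 0\<close>]) (use d in blast)
qed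

lemma abs_cont_on_subinterval:
  assumes "abs_cont_on s t f" "s \<le> s'" "t' \<le> t"
  shows "abs_cont_on s' t' f"
  unfolding abs_cont_on_def
proof (intro allI impI)
  fix e :: real assume "e > 0"
  then obtain d where "d > 0" and d: "\<And>(N::nat) l u. \<forall>k<N. l k \<le> u k \<and> s \<le> l k \<and> u k \<le> t \<Longrightarrow>
       \<forall>i<N. \<forall>j<N. i \<noteq> j \<longrightarrow> {l i<..<u i} \<inter> {l j<..<u j} = {} \<Longrightarrow>
       (\<Sum>k<N. u k - l k) < d \<Longrightarrow> (\<Sum>k<N. norm (f (u k) - f (l k))) < e"
    by (rule abs_cont_onD[OF assms(1)]) (rule that)
  show "\<exists>d>0. \<forall>(N::nat) l u. (\<forall>k<N. l k \<le> u k \<and> s' \<le> l k \<and> u k \<le> t') \<and>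
      (\<forall>i<N. \<forall>j<N. i \<noteq> j \<longrightarrow> {l i<..<u i} \<inter> {l j<..<u j} = {}) \<and> (\<Sum>k<N. u k - l k) < d
      \<longrightarrow> (\<Sum>k<N. norm (f (u k) - f (l k))) < e"
  proof (intro exI[of _ d] conjI allI impI)
    fix N :: nat and l u :: "nat \<Rightarrow> real"
    assume "(\<forall>k<N. l k \<le> u k \<and> s' \<le> l k \<and> u k \<le> t') \<and>
      (\<forall>i<N. \<forall>j<N. i \<noteq> j \<longrightarrow> {l i<..<u i} \<inter> {l j<..<u j} = {}) \<and> (\<Sum>k<N. u k - l k) < d"
    then have lu: "\<forall>k<N. l k \<le> u k \<and> s' \<le> l k \<and> u k \<le> t'"
      and disj: "\<forall>i<N. \<forall>j<N. i \<noteq> j \<longrightarrow> {l i<..<u i} \<inter> {l j<..<u j} = {}"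
      and len: "(\<Sum>k<N. u k - l k) < d"
      by blast+
    have "\<forall>k<N. l k \<le> u k \<and> s \<le> l k \<and> u k \<le> t"
      using lu assms(2,3) by force
    then show "(\<Sum>k<N. norm (f (u k) - f (l k))) < e"
      using d disj len by blast
  qed (fact \<open>d > 0\<close>)
qed

lemma abs_cont_onD_finite:
  assumes "abs_cont_on s t f" "e > 0"
  obtains d where "d > 0"
    "\<And>(I :: 'i set) l u. finite I \<Longrightarrow> (\<And>i. i \<in> I \<Longrightarrow> l i \<le> u i \<and> s \<le> l i \<and> u i \<le> t) \<Longrightarrow>
       (\<And>i j. i \<in> I \<Longrightarrow> j \<in> I \<Longrightarrow> i \<noteq> j \<Longrightarrow> {l i<..<u i} \<inter> {l j<..<u j} = {}) \<Longrightarrow>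
       (\<Sum>i\<in>I. u i - l i) < d \<Longrightarrow> (\<Sum>i\<in>I. norm (f (u i) - f (l i))) < e"
proof -
  obtain d where "d > 0" and d: "\<And>(N::nat) l u. \<forall>k<N. l k \<le> u k \<and> s \<le> l k \<and> u k \<le> t \<Longrightarrow>
       \<forall>i<N. \<forall>j<N. i \<noteq> j \<longrightarrow> {l i<..<u i} \<inter> {l j<..<u j} = {} \<Longrightarrow>
       (\<Sum>k<N. u k - l k) < d \<Longrightarrow> (\<Sum>k<N. norm (f (u k) - f (l k))) < e"
    by (rule abs_cont_onD[OF assms]) (rule that)
  show thesis
  proof (rule that[OF \<open>d > 0\<close>])
    fix I :: "'i set" and l u :: "'i \<Rightarrow> real"
    assume "finite I" and lu: "\<And>i. i \<in> I \<Longrightarrow> l i \<le> u i \<and> s \<le> l i \<and> u i \<le> t"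
      and disj: "\<And>i j. i \<in> I \<Longrightarrow> j \<in> I \<Longrightarrow> i \<noteq> j \<Longrightarrow> {l i<..<u i} \<inter> {l j<..<u j} = {}"
      and len: "(\<Sum>i\<in>I. u i - l i) < d"
    obtain g where g: "bij_betw g {..<card I} I"
      using ex_bij_betw_nat_finite[OF \<open>finite I\<close>] atLeast0LessThan by auto
    have reindex: "(\<Sum>k<card I. F (g k)) = (\<Sum>i\<in>I. F i)" for F :: "'i \<Rightarrow> real"
      using sum.reindex_bij_betw[OF g] .
    have gI: "g k \<in> I" if "k < card I" for k
      using g that by (auto simp: bij_betw_def)
    have "(\<Sum>k<card I. norm (f (u (g k)) - f (l (g k)))) < e"
    proof (rule d)
      show "\<forall>i<card I. \<forall>j<card I. i \<noteq> j \<longrightarrow> {l (g i)<..<u (g i)} \<inter> {l (g j)<..<u (g j)} = {}"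
      proof (intro allI impI)
        fix i j assume ij: "i < card I" "j < card I" "i \<noteq> j"
        then have "g i \<noteq> g j"
          using g by (auto simp: bij_betw_def inj_on_def)
        then show "{l (g i)<..<u (g i)} \<inter> {l (g j)<..<u (g j)} = {}"
          using disj gI ij(1,2) by blast
      qed
    qed (use lu gI len reindex[of "\<lambda>i. u i - l i"] in auto)
    then show "(\<Sum>i\<in>I. norm (f (u i) - f (l i))) < e"
      using reindex[of "\<lambda>i. norm (f (u i) - f (l i))"] by simp
  qed
qed

lemma mult_div_double_succ_less:
  fixes K e :: real
  assumes "K \<ge> 0" "e > 0"
  shows "K * (e / (2 * (K + 1))) < e / 2"
proof -
  have "K * (e / (2 * (K + 1))) = e / 2 * (K / (K + 1))" by simp
  also have "\<dots> < e / 2 * 1" using assms by (intro mult_strict_left_mono) auto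
  finally show ?thesis by simp
qed

lemma abs_cont_on_dominated:
  assumes "abs_cont_on s t f" "C \<ge> 0" "D \<ge> 0"
    and dom: "\<And>p q. s \<le> p \<Longrightarrow> p \<le> q \<Longrightarrow> q \<le> t \<Longrightarrow> norm (g q - g p) \<le> C * norm (f q - f p) + D * (q - p)"
  shows "abs_cont_on s t g"
  unfolding abs_cont_on_def
proof (intro allI impI)
  fix e :: real assume "e > 0"
  then have "e / (2 * (C + 1)) > 0" using \<open>C \<ge> 0\<close> by simp
  then obtain d where "d > 0" and d: "\<And>(N::nat) l u. \<forall>k<N. l k \<le> u k \<and> s \<le> l k \<and> u k \<le> t \<Longrightarrow>
       \<forall>i<N. \<forall>j<N. i \<noteq> j \<longrightarrow> {l i<..<u i} \<inter> {l j<..<u j} = {} \<Longrightarrow>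
       (\<Sum>k<N. u k - l k) < d \<Longrightarrow> (\<Sum>k<N. norm (f (u k) - f (l k))) < e / (2 * (C + 1))"
    by (rule abs_cont_onD[OF assms(1)]) (rule that)
  define d' where "d' = min d (e / (2 * (D + 1)))"
  have bound: "(\<Sum>k<N. norm (g (u k) - g (l k))) < e"
    if lu: "\<forall>k<N. l k \<le> u k \<and> s \<le> l k \<and> u k \<le> t"
      and disj: "\<forall>i<N. \<forall>j<N. i \<noteq> j \<longrightarrow> {l i<..<u i} \<inter> {l j<..<u j} = {}"
      and len: "(\<Sum>k<N. u k - l k) < d'" for N :: nat and l u :: "nat \<Rightarrow> real"
  proof -
    have "(\<Sum>k<N. norm (g (u k) - g (l k))) \<le> (\<Sum>k<N. C * norm (f (u k) - f (l k)) + D * (u k - l k))"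
      using lu dom by (intro sum_mono) simp
    also have "\<dots> = C * (\<Sum>k<N. norm (f (u k) - f (l k))) + D * (\<Sum>k<N. u k - l k)"
      by (simp add: sum.distrib sum_distrib_left)
    also have "\<dots> \<le> C * (e / (2 * (C + 1))) + D * (e / (2 * (D + 1)))"
    proof (intro add_mono mult_left_mono)
      have "(\<Sum>k<N. u k - l k) < d" using len by (simp add: d'_def)
      then show "(\<Sum>k<N. norm (f (u k) - f (l k))) \<le> e / (2 * (C + 1))"
        using d[OF lu disj] by (simp only: less_imp_le)
      show "(\<Sum>k<N. u k - l k) \<le> e / (2 * (D + 1))" using len by (simp add: d'_def)
    qed (use assms(2,3) in auto)
    also have "\<dots> < e / 2 + e / 2"
      using mult_div_double_succ_less[OF assms(2) \<open>e > 0\<close>] mult_div_double_succ_less[OF assms(3) \<open>e > 0\<close>]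
      by (rule add_strict_mono)
    finally show ?thesis by simp
  qed
  show "\<exists>d>0. \<forall>(N::nat) l u. (\<forall>k<N. l k \<le> u k \<and> s \<le> l k \<and> u k \<le> t) \<and>
      (\<forall>i<N. \<forall>j<N. i \<noteq> j \<longrightarrow> {l i<..<u i} \<inter> {l j<..<u j} = {}) \<and> (\<Sum>k<N. u k - l k) < d
      \<longrightarrow> (\<Sum>k<N. norm (g (u k) - g (l k))) < e"
  proof (intro exI[of _ d'] conjI allI impI)
    show "d' > 0" using \<open>d > 0\<close> \<open>e > 0\<close> \<open>D \<ge> 0\<close> by (simp add: d'_def)
  qed (elim conjE, rule bound)
qed

lemma abs_cont_on_add_linear:
  fixes G :: "real \<Rightarrow> real"
  assumes "abs_cont_on s t G"
  shows "abs_cont_on s t (\<lambda>\<tau>. G \<tau> + c * \<tau>)"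
proof (rule abs_cont_on_dominated[where C = 1 and D = "\<bar>c\<bar>", OF assms])
  fix p q :: real assume "s \<le> p" "p \<le> q" "q \<le> t"
  have "G q + c * q - (G p + c * p) = (G q - G p) + c * (q - p)"
    by (simp add: algebra_simps)
  then have "norm (G q + c * q - (G p + c * p)) \<le> norm (G q - G p) + norm (c * (q - p))"
    by (simp only: norm_triangle_ineq)
  then show "norm (G q + c * q - (G p + c * p)) \<le> 1 * norm (G q - G p) + \<bar>c\<bar> * (q - p)"
    using \<open>p \<le> q\<close> by (simp add: abs_mult)
qed simp_all

lemma abs_cont_on_compose_lipschitz:
  fixes W :: "real \<Rightarrow> 'a::real_normed_vector" and F :: "'a \<Rightarrow> 'b::real_normed_vector"
  assumes "abs_cont_on s t W" and "C-lipschitz_on UNIV F"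
  shows "abs_cont_on s t (\<lambda>\<tau>. F (W \<tau>))"
  using assms(2)
  by (intro abs_cont_on_dominated[OF assms(1) _ order_refl]) (auto simp: lipschitz_on_def dist_norm)

section \<open>Straddle lower derivatives\<close>

text \<open>Unlike a
  derivative it survives pointwise minima, which is what the minimum margin requires.\<close>
definition straddle_lower_deriv :: "(real \<Rightarrow> real) \<Rightarrow> real \<Rightarrow> real \<Rightarrow> bool" where
  "straddle_lower_deriv g t D \<longleftrightarrow>
     (\<forall>e>0. \<exists>r>0. \<forall>u v. u \<le> t \<longrightarrow> t \<le> v \<longrightarrow> v - u < r \<longrightarrow> (D - e) * (v - u) \<le> g v - g u)"

lemma has_real_derivative_straddle:
  assumes "(g has_real_derivative D) (at t)" "e > 0"
  obtains r where "r > 0"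
    "\<And>u v. u \<le> t \<Longrightarrow> t \<le> v \<Longrightarrow> v - u < r \<Longrightarrow> \<bar>g v - g u - D * (v - u)\<bar> \<le> e * (v - u)"
proof -
  have "(g has_derivative (*) D) (at t)"
    using assms(1) by (simp add: has_field_derivative_def)
  then obtain r where "r > 0"
    and r: "\<And>y. norm (y - t) < r \<Longrightarrow> norm (g y - g t - D * (y - t)) \<le> e * norm (y - t)"
    using assms(2) unfolding has_derivative_at_alt by blast
  show thesis
  proof (rule that[OF \<open>r > 0\<close>])
    fix u v assume uv: "u \<le> t" "t \<le> v" "v - u < r"
    have "\<bar>g v - g t - D * (v - t)\<bar> \<le> e * (v - t)" "\<bar>g u - g t - D * (u - t)\<bar> \<le> e * (t - u)"
      using r[of v] r[of u] uv by auto
    then show "\<bar>g v - g u - D * (v - u)\<bar> \<le> e * (v - u)"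
      by (simp add: abs_le_iff algebra_simps)
  qed
qed

lemma has_real_derivative_imp_straddle_lower_deriv:
  assumes "(g has_real_derivative D) (at t)"
  shows "straddle_lower_deriv g t D"
  unfolding straddle_lower_deriv_def
proof (intro allI impI)
  fix e :: real assume "e > 0"
  obtain r where "r > 0"
    and r: "\<And>u v. u \<le> t \<Longrightarrow> t \<le> v \<Longrightarrow> v - u < r \<Longrightarrow> \<bar>g v - g u - D * (v - u)\<bar> \<le> e * (v - u)"
    using has_real_derivative_straddle[OF assms \<open>e > 0\<close>] by blast
  have "(D - e) * (v - u) \<le> g v - g u" if "u \<le> t" "t \<le> v" "v - u < r" for u v
  proof -
    have "(D - e) * (v - u) = D * (v - u) - e * (v - u)"
      by (simp add: algebra_simps)
    then show ?thesis
      using r[OF that] by (simp add: abs_le_iff)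
  qed
  then show "\<exists>r>0. \<forall>u v. u \<le> t \<longrightarrow> t \<le> v \<longrightarrow> v - u < r \<longrightarrow> (D - e) * (v - u) \<le> g v - g u"
    using \<open>r > 0\<close> by blast
qed

lemma straddle_lower_deriv_mono:
  assumes "straddle_lower_deriv g t D" "D' \<le> D"
  shows "straddle_lower_deriv g t D'"
  unfolding straddle_lower_deriv_def
proof (intro allI impI)
  fix e :: real assume "e > 0"
  then obtain r where "r > 0"
    and r: "\<forall>u v. u \<le> t \<longrightarrow> t \<le> v \<longrightarrow> v - u < r \<longrightarrow> (D - e) * (v - u) \<le> g v - g u"
    using assms(1) unfolding straddle_lower_deriv_def by blast
  have "(D' - e) * (v - u) \<le> (D - e) * (v - u)" if "u \<le> v" for u v
    using assms(2) that by (intro mult_right_mono) auto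
  then show "\<exists>r>0. \<forall>u v. u \<le> t \<longrightarrow> t \<le> v \<longrightarrow> v - u < r \<longrightarrow> (D' - e) * (v - u) \<le> g v - g u"
    using \<open>r > 0\<close> r by (meson order_trans)
qed

lemma straddle_lower_deriv_add:
  assumes "straddle_lower_deriv f t D1" "straddle_lower_deriv g t D2"
  shows "straddle_lower_deriv (\<lambda>\<tau>. f \<tau> + g \<tau>) t (D1 + D2)"
  unfolding straddle_lower_deriv_def
proof (intro allI impI)
  fix e :: real assume "e > 0"
  then obtain r1 r2 where "r1 > 0" "r2 > 0"
    and r1: "\<forall>u v. u \<le> t \<longrightarrow> t \<le> v \<longrightarrow> v - u < r1 \<longrightarrow> (D1 - e / 2) * (v - u) \<le> f v - f u"
    and r2: "\<forall>u v. u \<le> t \<longrightarrow> t \<le> v \<longrightarrow> v - u < r2 \<longrightarrow> (D2 - e / 2) * (v - u) \<le> g v - g u"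
    using assms half_gt_zero unfolding straddle_lower_deriv_def by metis
  have "(D1 + D2 - e) * (v - u) \<le> f v + g v - (f u + g u)"
    if "u \<le> t" "t \<le> v" "v - u < min r1 r2" for u v
  proof -
    have "(D1 + D2 - e) * (v - u) = (D1 - e / 2) * (v - u) + (D2 - e / 2) * (v - u)"
      by (simp add: algebra_simps)
    then show ?thesis
      using r1[rule_format, of u v] r2[rule_format, of u v] that by simp
  qed
  then show "\<exists>r>0. \<forall>u v. u \<le> t \<longrightarrow> t \<le> v \<longrightarrow> v - u < r \<longrightarrow>
      (D1 + D2 - e) * (v - u) \<le> f v + g v - (f u + g u)"
    using \<open>r1 > 0\<close> \<open>r2 > 0\<close> by (intro exI[of _ "min r1 r2"]) auto
qed

lemma straddle_lower_deriv_sum: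
  assumes "finite I" "\<And>i. i \<in> I \<Longrightarrow> straddle_lower_deriv (f i) t (D i)"
  shows "straddle_lower_deriv (\<lambda>\<tau>. \<Sum>i\<in>I. f i \<tau>) t (\<Sum>i\<in>I. D i)"
  using assms
proof (induction I rule: finite_induct)
  case empty
  show ?case by (auto simp: straddle_lower_deriv_def intro: exI[of _ 1])
next
  case (insert i I)
  then show ?case by (auto intro: straddle_lower_deriv_add)
qed

lemma straddle_lower_deriv_add_linear:
  "straddle_lower_deriv f t D \<Longrightarrow> straddle_lower_deriv (\<lambda>\<tau>. f \<tau> + c * \<tau>) t (D + c)"
  by (rule straddle_lower_deriv_add) (auto intro!: has_real_derivative_imp_straddle_lower_deriv derivative_eq_intros)

lemma eventually_minimizers_subset:
  fixes f :: "'i \<Rightarrow> real \<Rightarrow> real"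
  assumes "finite I" "\<forall>i\<in>I. isCont (f i) t"
  shows "\<forall>\<^sub>F v in nhds t. \<forall>k\<in>I. (\<forall>j\<in>I. f k v \<le> f j v) \<longrightarrow> (\<forall>j\<in>I. f k t \<le> f j t)"
proof -
  have "\<forall>\<^sub>F v in nhds t. \<forall>k\<in>I. \<forall>j\<in>I. f j t < f k t \<longrightarrow> f j v < f k v"
  proof (intro eventually_ball_finite[OF assms(1)] ballI)
    fix k j assume "k \<in> I" "j \<in> I"
    show "\<forall>\<^sub>F v in nhds t. f j t < f k t \<longrightarrow> f j v < f k v"
    proof (cases "f j t < f k t")
      case True
      have "((\<lambda>v. f k v - f j v) \<longlongrightarrow> f k t - f j t) (at t)"
        using assms(2) \<open>k \<in> I\<close> \<open>j \<in> I\<close> by (intro tendsto_diff) (auto simp: isCont_def)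
      then have "\<forall>\<^sub>F v in at t. 0 < f k v - f j v"
        using True by (intro order_tendstoD(1)) auto
      then show ?thesis
        using True unfolding eventually_nhds_conv_at by (auto elim: eventually_mono)
    qed simp
  qed
  then show ?thesis
    by eventually_elim (meson not_le)
qed

lemma straddle_lower_deriv_Min:
  fixes f :: "'i \<Rightarrow> real \<Rightarrow> real"
  assumes "finite I" "I \<noteq> {}" "\<forall>i\<in>I. isCont (f i) t"
    and active: "\<And>i. i \<in> I \<Longrightarrow> \<forall>j\<in>I. f i t \<le> f j t \<Longrightarrow> straddle_lower_deriv (f i) t D"
  shows "straddle_lower_deriv (\<lambda>\<tau>. Min ((\<lambda>i. f i \<tau>) ` I)) t D"
  unfolding straddle_lower_deriv_def
proof (intro allI impI)
  fix e :: real assume "e > 0"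
  obtain r0 where "r0 > 0" and r0: "\<And>v. dist v t < r0 \<Longrightarrow>
      \<forall>k\<in>I. (\<forall>j\<in>I. f k v \<le> f j v) \<longrightarrow> (\<forall>j\<in>I. f k t \<le> f j t)"
    using eventually_minimizers_subset[OF assms(1,3)] unfolding eventually_nhds_metric by blast
  define A where "A = {i \<in> I. \<forall>j\<in>I. f i t \<le> f j t}"
  have "\<forall>i\<in>A. \<exists>r>0. \<forall>u v. u \<le> t \<longrightarrow> t \<le> v \<longrightarrow> v - u < r \<longrightarrow> (D - e) * (v - u) \<le> f i v - f i u"
    using active \<open>e > 0\<close> unfolding A_def straddle_lower_deriv_def by blast
  then obtain r where r: "\<And>i. i \<in> A \<Longrightarrow> r i > 0"
    "\<And>i u v. i \<in> A \<Longrightarrow> u \<le> t \<Longrightarrow> t \<le> v \<Longrightarrow> v - u < r i \<Longrightarrow> (D - e) * (v - u) \<le> f i v - f i u"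
    by metis
  have "finite A" using assms(1) unfolding A_def by auto
  define \<rho> where "\<rho> = Min (insert r0 (r ` A))"
  have "\<rho> > 0" "\<rho> \<le> r0" and \<rho>_le: "\<And>i. i \<in> A \<Longrightarrow> \<rho> \<le> r i"
    using \<open>finite A\<close> \<open>r0 > 0\<close> r(1) unfolding \<rho>_def by auto
  have "(D - e) * (v - u) \<le> Min ((\<lambda>i. f i v) ` I) - Min ((\<lambda>i. f i u) ` I)"
    if uv: "u \<le> t" "t \<le> v" "v - u < \<rho>" for u v
  proof -
    have "Min ((\<lambda>i. f i v) ` I) \<in> (\<lambda>i. f i v) ` I"
      using assms(1,2) by (intro Min_in) auto
    then obtain k where k: "k \<in> I" "f k v = Min ((\<lambda>i. f i v) ` I)" by auto
    then have "\<forall>j\<in>I. f k v \<le> f j v" using assms(1) by auto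
    moreover have "dist v t < r0" using uv \<open>\<rho> \<le> r0\<close> by (simp add: dist_real_def)
    ultimately have "k \<in> A" using r0 k(1) unfolding A_def by blast
    have "Min ((\<lambda>i. f i u) ` I) \<le> f k u" using k(1) assms(1) by auto
    moreover have "(D - e) * (v - u) \<le> f k v - f k u"
      using r(2)[OF \<open>k \<in> A\<close> uv(1,2)] uv(3) \<rho>_le[OF \<open>k \<in> A\<close>] by linarith
    ultimately show ?thesis using k(2) by linarith
  qed
  then show "\<exists>r>0. \<forall>u v. u \<le> t \<longrightarrow> t \<le> v \<longrightarrow> v - u < r \<longrightarrow>
      (D - e) * (v - u) \<le> Min ((\<lambda>i. f i v) ` I) - Min ((\<lambda>i. f i u) ` I)"
    using \<open>\<rho> > 0\<close> by blast
qed

section \<open>Monotonicity of absolutely continuous functions\<close>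

lemma null_set_open_cover:
  assumes "N \<in> null_sets lborel" "\<delta> > 0"
  obtains U where "open U" "N \<subseteq> U" "U \<in> fmeasurable lborel" "measure lborel U < \<delta>"
proof -
  have "N \<in> sets borel" using assms(1) by (auto simp: null_sets_def)
  then obtain U where U: "open U" "N \<subseteq> U" "emeasure lborel (U - N) < \<delta>"
    using outer_regular_lborel[OF _ assms(2)] by blast
  have "U \<in> sets lborel" using U(1) by auto
  then have less: "emeasure lborel U < \<delta>"
    using U(3) emeasure_Diff_null_set[OF assms(1)] by simp
  then have "U \<in> fmeasurable lborel"
    using \<open>U \<in> sets lborel\<close> order.strict_trans[OF less ennreal_less_top] by (auto simp: fmeasurable_def)
  moreover have "measure lborel U < \<delta>"
    using less emeasure_eq_measure2[OF \<open>U \<in> fmeasurable lborel\<close>] by (simp add: ennreal_less_iff)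
  ultimately show thesis using U(1,2) that by blast
qed

lemma sum_interval_lengths_le_measure:
  fixes l u :: "'i \<Rightarrow> real"
  assumes "finite I" "\<And>i. i \<in> I \<Longrightarrow> l i \<le> u i"
    and disj: "\<And>i j. i \<in> I \<Longrightarrow> j \<in> I \<Longrightarrow> i \<noteq> j \<Longrightarrow> {l i<..<u i} \<inter> {l j<..<u j} = {}"
    and "\<And>i. i \<in> I \<Longrightarrow> {l i<..<u i} \<subseteq> U" "U \<in> fmeasurable lborel"
  shows "(\<Sum>i\<in>I. u i - l i) \<le> measure lborel U"
proof -
  have "(\<Sum>i\<in>I. u i - l i) = (\<Sum>i\<in>I. measure lborel {l i<..<u i})"
    using assms(2) by simp
  also have "\<dots> = measure lborel (\<Union>i\<in>I. {l i<..<u i})"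
  proof (rule measure_UNION'[symmetric, OF assms(1)])
    show "{l i<..<u i} \<in> fmeasurable lborel" if "i \<in> I" for i
      using assms(2)[OF that] by (simp add: fmeasurable_def)
    show "pairwise (\<lambda>i j. disjnt {l i<..<u i} {l j<..<u j}) I"
      unfolding pairwise_def disjnt_def using disj by blast
  qed
  also have "\<dots> \<le> measure lborel U"
  proof (rule measure_mono_fmeasurable[OF _ _ assms(5)])
    show "(\<Union>i\<in>I. {l i<..<u i}) \<subseteq> U" using assms(4) by blast
    have "open (\<Union>i\<in>I. {l i<..<u i})" by (intro open_UN) auto
    then show "(\<Union>i\<in>I. {l i<..<u i}) \<in> sets lborel" by (simp add: borel_open)
  qed
  finally show ?thesis .
qed

lemma tagged_division_of_real_interval_member:
  fixes a b :: real
  assumes "p tagged_division_of {a..b}" "(t, K) \<in> p"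
  shows "K = {Inf K..Sup K}" "Inf K \<le> t" "t \<le> Sup K" "a \<le> Inf K" "Sup K \<le> b"
    and "Inf K \<in> K" "Sup K \<in> K"
proof -
  obtain c d where "K = cbox c d"
    using tagged_division_ofD(4)[OF assms] by blast
  then have K: "K = {c..d}" by simp
  have "t \<in> K" "K \<subseteq> {a..b}"
    using tagged_division_ofD(2,3)[OF assms] by auto
  then have "c \<le> t" "t \<le> d" "a \<le> c" "d \<le> b"
    unfolding K by auto
  then show "K = {Inf K..Sup K}" "Inf K \<le> t" "t \<le> Sup K" "a \<le> Inf K" "Sup K \<le> b"
    and "Inf K \<in> K" "Sup K \<in> K"
    unfolding K by simp_all
qed

lemma tagged_division_of_real_interval_disjoint:
  fixes a b :: real
  assumes p: "p tagged_division_of {a..b}"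
    and "(t1, K1) \<in> p" "(t2, K2) \<in> p" "(t1, K1) \<noteq> (t2, K2)"
  shows "{Inf K1<..<Sup K1} \<inter> {Inf K2<..<Sup K2} = {}"
proof -
  have "interior K1 = {Inf K1<..<Sup K1}" "interior K2 = {Inf K2<..<Sup K2}"
    using arg_cong[OF tagged_division_of_real_interval_member(1)[OF p assms(2)], of interior]
      arg_cong[OF tagged_division_of_real_interval_member(1)[OF p assms(3)], of interior]
    by simp_all
  then show ?thesis
    using tagged_division_ofD(5)[OF assms] by simp
qed

lemma tagged_division_decrease_bound:
  fixes G :: "real \<Rightarrow> real"
  assumes p: "p tagged_division_of {a..b}" and "a \<le> b" "e \<ge> 0"
    and good: "\<And>t K. (t, K) \<in> p \<Longrightarrow> t \<notin> S \<Longrightarrow> - e * (Sup K - Inf K) \<le> G (Sup K) - G (Inf K)"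
    and bad: "(\<Sum>(t, K)\<in>{(t, K) \<in> p. t \<in> S}. \<bar>G (Sup K) - G (Inf K)\<bar>) < e"
  shows "G a - G b \<le> e + e * (b - a)"
proof -
  define bad_p where "bad_p = {(t, K) \<in> p. t \<in> S}"
  define good_p where "good_p = {(t, K) \<in> p. t \<notin> S}"
  have "finite p" using p by blast
  have split: "p = bad_p \<union> good_p" "bad_p \<inter> good_p = {}" "bad_p \<subseteq> p" "good_p \<subseteq> p"
    unfolding bad_p_def good_p_def by auto
  then have fin: "finite bad_p" "finite good_p"
    using \<open>finite p\<close> finite_subset by blast+
  have len_nonneg: "0 \<le> Sup K - Inf K" if "(t, K) \<in> p" for t K
    using tagged_division_of_real_interval_member(2,3)[OF p that] by simp
  have "G b - G a = (\<Sum>(t, K)\<in>p. G (Sup K) - G (Inf K))"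
    using additive_tagged_division_1[OF \<open>a \<le> b\<close> p, of G] by simp
  also have "\<dots> = (\<Sum>(t, K)\<in>bad_p. G (Sup K) - G (Inf K)) + (\<Sum>(t, K)\<in>good_p. G (Sup K) - G (Inf K))"
    by (subst split(1)) (rule sum.union_disjoint[OF fin split(2)])
  also have "\<dots> \<ge> - e + - e * (b - a)"
  proof (rule add_mono)
    have "- (\<Sum>(t, K)\<in>bad_p. \<bar>G (Sup K) - G (Inf K)\<bar>) \<le> (\<Sum>(t, K)\<in>bad_p. G (Sup K) - G (Inf K))"
      unfolding sum_negf[symmetric] by (rule sum_mono) auto
    then show "- e \<le> (\<Sum>(t, K)\<in>bad_p. G (Sup K) - G (Inf K))"
      using bad unfolding bad_p_def by linarith
    have "(\<Sum>(t, K)\<in>good_p. Sup K - Inf K) \<le> (\<Sum>(t, K)\<in>p. Sup K - Inf K)"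
      using len_nonneg \<open>finite p\<close> by (intro sum_mono2) (auto simp: good_p_def)
    also have "\<dots> = b - a"
      using additive_tagged_division_1[OF \<open>a \<le> b\<close> p, of "\<lambda>x. x"] by simp
    finally have "- e * (b - a) \<le> - e * (\<Sum>(t, K)\<in>good_p. Sup K - Inf K)"
      using \<open>e \<ge> 0\<close> by (simp add: mult_left_mono)
    also have "\<dots> = (\<Sum>(t, K)\<in>good_p. - e * (Sup K - Inf K))"
      by (simp add: sum_distrib_left case_prod_unfold)
    also have "\<dots> \<le> (\<Sum>(t, K)\<in>good_p. G (Sup K) - G (Inf K))"
      using good by (intro sum_mono) (auto simp: good_p_def)
    finally show "- e * (b - a) \<le> (\<Sum>(t, K)\<in>good_p. G (Sup K) - G (Inf K))" .
  qed
  finally show ?thesis by linarith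
qed

lemma abs_cont_on_tagged_variation_small:
  fixes G :: "real \<Rightarrow> real"
  assumes "abs_cont_on a b G" "e > 0"
  obtains \<delta> where "\<delta> > 0"
    "\<And>p U S. p tagged_division_of {a..b} \<Longrightarrow> U \<in> fmeasurable lborel \<Longrightarrow> measure lborel U < \<delta> \<Longrightarrow>
       (\<And>t K. (t, K) \<in> p \<Longrightarrow> t \<in> S \<Longrightarrow> K \<subseteq> U) \<Longrightarrow>
       (\<Sum>(t, K)\<in>{(t, K) \<in> p. t \<in> S}. \<bar>G (Sup K) - G (Inf K)\<bar>) < e"
proof -
  obtain \<delta> where "\<delta> > 0" and \<delta>: "\<And>(I :: (real \<times> real set) set) l u. finite I \<Longrightarrow> (\<And>i. i \<in> I \<Longrightarrow> l i \<le> u i \<and> a \<le> l i \<and> u i \<le> b) \<Longrightarrow>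
       (\<And>i j. i \<in> I \<Longrightarrow> j \<in> I \<Longrightarrow> i \<noteq> j \<Longrightarrow> {l i<..<u i} \<inter> {l j<..<u j} = {}) \<Longrightarrow>
       (\<Sum>i\<in>I. u i - l i) < \<delta> \<Longrightarrow> (\<Sum>i\<in>I. norm (G (u i) - G (l i))) < e"
    by (rule abs_cont_onD_finite[OF assms]) (rule that; blast)
  show thesis
  proof (rule that[OF \<open>\<delta> > 0\<close>])
    fix p U S
    assume p: "p tagged_division_of {a..b}" and U: "U \<in> fmeasurable lborel" "measure lborel U < \<delta>"
      and inside: "\<And>t K. (t, K) \<in> p \<Longrightarrow> t \<in> S \<Longrightarrow> K \<subseteq> U"
    define I where "I = {(t, K) \<in> p. t \<in> S}"
    have "finite I" using p unfolding I_def by (auto intro: finite_subset)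
    have member: "Inf K \<le> Sup K \<and> a \<le> Inf K \<and> Sup K \<le> b" if "(t, K) \<in> I" for t K
      using tagged_division_of_real_interval_member(2-5)[OF p, of t K] that unfolding I_def by auto
    have disj: "{Inf (snd i)<..<Sup (snd i)} \<inter> {Inf (snd j)<..<Sup (snd j)} = {}"
      if "i \<in> I" "j \<in> I" "i \<noteq> j" for i j
      using tagged_division_of_real_interval_disjoint[OF p, of "fst i" "snd i" "fst j" "snd j"] that
      unfolding I_def by auto
    have lengths: "(\<Sum>i\<in>I. Sup (snd i) - Inf (snd i)) \<le> measure lborel U"
    proof (rule sum_interval_lengths_le_measure[OF \<open>finite I\<close> _ disj _ U(1)])
      fix i assume "i \<in> I"
      then show "Inf (snd i) \<le> Sup (snd i)" using member[of "fst i" "snd i"] by simp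
      have "{Inf (snd i)<..<Sup (snd i)} \<subseteq> {Inf (snd i)..Sup (snd i)}" by auto
      also have "\<dots> = snd i"
        using tagged_division_of_real_interval_member(1)[OF p, of "fst i" "snd i"] \<open>i \<in> I\<close>
        unfolding I_def by auto
      also have "\<dots> \<subseteq> U" using inside[of "fst i" "snd i"] \<open>i \<in> I\<close> unfolding I_def by auto
      finally show "{Inf (snd i)<..<Sup (snd i)} \<subseteq> U" .
    qed
    have "(\<Sum>i\<in>I. norm (G (Sup (snd i)) - G (Inf (snd i)))) < e"
    proof (rule \<delta>[OF \<open>finite I\<close>])
      show "Inf (snd i) \<le> Sup (snd i) \<and> a \<le> Inf (snd i) \<and> Sup (snd i) \<le> b" if "i \<in> I" for i
        using member[of "fst i" "snd i"] that by simp
      show "(\<Sum>i\<in>I. Sup (snd i) - Inf (snd i)) < \<delta>"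
        using lengths U(2) by linarith
    qed (fact disj)
    then show "(\<Sum>(t, K)\<in>{(t, K) \<in> p. t \<in> S}. \<bar>G (Sup K) - G (Inf K)\<bar>) < e"
      unfolding I_def by (simp add: case_prod_unfold)
  qed
qed

lemma straddle_lower_deriv_gauge:
  fixes G :: "real \<Rightarrow> real"
  assumes "e > 0"
  obtains r where "\<And>t. r t > 0"
    "\<And>t u v. straddle_lower_deriv G t 0 \<Longrightarrow> u \<le> t \<Longrightarrow> t \<le> v \<Longrightarrow> v - u < r t \<Longrightarrow>
       - e * (v - u) \<le> G v - G u"
proof -
  have "\<exists>\<rho>. \<rho> > 0 \<and> (straddle_lower_deriv G t 0 \<longrightarrow>
      (\<forall>u v. u \<le> t \<longrightarrow> t \<le> v \<longrightarrow> v - u < \<rho> \<longrightarrow> (0 - e) * (v - u) \<le> G v - G u))" for t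
  proof (cases "straddle_lower_deriv G t 0")
    case True
    then show ?thesis using assms unfolding straddle_lower_deriv_def by blast
  qed (use zero_less_one in blast)
  then have "\<forall>t. \<exists>\<rho>. \<rho> > 0 \<and> (straddle_lower_deriv G t 0 \<longrightarrow>
      (\<forall>u v. u \<le> t \<longrightarrow> t \<le> v \<longrightarrow> v - u < \<rho> \<longrightarrow> (0 - e) * (v - u) \<le> G v - G u))"
    by blast
  from choice[OF this] obtain r where r: "\<forall>t. r t > 0 \<and> (straddle_lower_deriv G t 0 \<longrightarrow>
      (\<forall>u v. u \<le> t \<longrightarrow> t \<le> v \<longrightarrow> v - u < r t \<longrightarrow> (0 - e) * (v - u) \<le> G v - G u))"
    by blast
  show thesis
  proof (rule that)
    show "r t > 0" for t using r by blast
    show "- e * (v - u) \<le> G v - G u"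
      if "straddle_lower_deriv G t 0" "u \<le> t" "t \<le> v" "v - u < r t" for t u v
      using r that by auto
  qed
qed

text \<open>Tags outside the exceptional null set see almost nondecreasing increments; the remaining
  tags lie in an open set of small measure, where absolute continuity bounds the variation.\<close>
lemma abs_cont_on_decrease_le:
  fixes G :: "real \<Rightarrow> real"
  assumes ac: "abs_cont_on a b G" and "a \<le> b" "e > 0"
    and ae: "AE t in lborel. a \<le> t \<and> t \<le> b \<longrightarrow> straddle_lower_deriv G t 0"
  shows "G a - G b \<le> e + e * (b - a)"
proof -
  obtain \<delta> where "\<delta> > 0" and \<delta>: "\<And>p U S. p tagged_division_of {a..b} \<Longrightarrow> U \<in> fmeasurable lborel \<Longrightarrow>
       measure lborel U < \<delta> \<Longrightarrow> (\<And>t K. (t, K) \<in> p \<Longrightarrow> t \<in> S \<Longrightarrow> K \<subseteq> U) \<Longrightarrow>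
       (\<Sum>(t, K)\<in>{(t, K) \<in> p. t \<in> S}. \<bar>G (Sup K) - G (Inf K)\<bar>) < e"
    by (rule abs_cont_on_tagged_variation_small[OF ac \<open>e > 0\<close>]) (rule that; blast)
  obtain N where N: "N \<in> null_sets lborel"
    and N_good: "\<And>t. t \<notin> N \<Longrightarrow> a \<le> t \<Longrightarrow> t \<le> b \<Longrightarrow> straddle_lower_deriv G t 0"
  proof (rule AE_E3[OF ae])
    fix N assume good: "\<And>t. t \<in> space lborel - N \<Longrightarrow> a \<le> t \<and> t \<le> b \<longrightarrow> straddle_lower_deriv G t 0"
      and "N \<in> null_sets lborel"
    show thesis
      by (rule that[OF \<open>N \<in> null_sets lborel\<close>]) (use good in simp)
  qed
  obtain U where U: "open U" "N \<subseteq> U" "U \<in> fmeasurable lborel" "measure lborel U < \<delta>"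
    using null_set_open_cover[OF N \<open>\<delta> > 0\<close>] by blast
  obtain r where r: "\<And>t. r t > 0"
    "\<And>t u v. straddle_lower_deriv G t 0 \<Longrightarrow> u \<le> t \<Longrightarrow> t \<le> v \<Longrightarrow> v - u < r t \<Longrightarrow>
       - e * (v - u) \<le> G v - G u"
    by (rule straddle_lower_deriv_gauge[where G = G, OF \<open>e > 0\<close>]) (rule that; blast)
  define \<Gamma> where "\<Gamma> t = ball t (r t / 2) \<inter> (if t \<in> U then U else UNIV)" for t
  have "gauge \<Gamma>"
    using r(1) U(1) unfolding gauge_def \<Gamma>_def by auto
  then obtain p where p: "p tagged_division_of {a..b}" "\<Gamma> fine p"
    using fine_division_exists_real by blast
  have in_ball: "K \<subseteq> ball t (r t / 2)" and "K \<subseteq> (if t \<in> U then U else UNIV)"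
    if "(t, K) \<in> p" for t K
    using p(2) that unfolding fine_def \<Gamma>_def by blast+
  then have in_U: "K \<subseteq> U" if "(t, K) \<in> p" "t \<in> U" for t K
    using that by fastforce
  show ?thesis
  proof (rule tagged_division_decrease_bound[OF p(1) \<open>a \<le> b\<close>, where S = N])
    fix t K assume tK: "(t, K) \<in> p" "t \<notin> N"
    note K = tagged_division_of_real_interval_member[OF p(1) tK(1)]
    have "Inf K \<in> ball t (r t / 2)" "Sup K \<in> ball t (r t / 2)"
      using K(6,7) in_ball[OF tK(1)] by blast+
    then have "Sup K - Inf K < r t"
      unfolding mem_ball dist_real_def abs_less_iff by linarith
    then show "- e * (Sup K - Inf K) \<le> G (Sup K) - G (Inf K)"
      using r(2)[OF N_good[OF tK(2)] K(2,3)] K(2-5) by simp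
  next
    show "(\<Sum>(t, K)\<in>{(t, K) \<in> p. t \<in> N}. \<bar>G (Sup K) - G (Inf K)\<bar>) < e"
      using in_U U(2) by (intro \<delta>[OF p(1) U(3,4)]) blast
  qed (use \<open>e > 0\<close> in simp)
qed

lemma abs_cont_on_nondecreasing:
  fixes G :: "real \<Rightarrow> real"
  assumes "abs_cont_on a b G" "a \<le> b"
    and "AE t in lborel. a \<le> t \<and> t \<le> b \<longrightarrow> straddle_lower_deriv G t 0"
  shows "G a \<le> G b"
proof (rule ccontr)
  assume "\<not> G a \<le> G b"
  define w where "w = 1 + (b - a)"
  define e where "e = (G a - G b) / (2 * w)"
  have "w > 0" using \<open>a \<le> b\<close> by (simp add: w_def)
  then have "e > 0" using \<open>\<not> G a \<le> G b\<close> by (simp add: e_def)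
  have "G a - G b \<le> e + e * (b - a)"
    by (rule abs_cont_on_decrease_le[OF assms(1,2) \<open>e > 0\<close> assms(3)])
  also have "\<dots> = e * w"
    by (simp add: w_def algebra_simps)
  also have "\<dots> = (G a - G b) / 2"
    using \<open>w > 0\<close> by (simp add: e_def)
  finally show False using \<open>\<not> G a \<le> G b\<close> by simp
qed

lemma abs_cont_on_lower_slope:
  fixes G :: "real \<Rightarrow> real"
  assumes "abs_cont_on a b G" "a \<le> b"
    and "AE t in lborel. a \<le> t \<and> t \<le> b \<longrightarrow> straddle_lower_deriv G t (D t)"
    and "\<And>t. a \<le> t \<Longrightarrow> t \<le> b \<Longrightarrow> c \<le> D t"
  shows "c * (b - a) \<le> G b - G a"
proof -
  have "G a + (- c) * a \<le> G b + (- c) * b"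
  proof (rule abs_cont_on_nondecreasing[OF abs_cont_on_add_linear[OF assms(1)] assms(2)])
    show "AE t in lborel. a \<le> t \<and> t \<le> b \<longrightarrow> straddle_lower_deriv (\<lambda>\<tau>. G \<tau> + - c * \<tau>) t 0"
      using assms(3)
    proof eventually_elim
      case (elim t)
      show ?case
      proof
        assume "a \<le> t \<and> t \<le> b"
        then have "straddle_lower_deriv G t c"
          using elim assms(4) straddle_lower_deriv_mono by blast
        then show "straddle_lower_deriv (\<lambda>\<tau>. G \<tau> + - c * \<tau>) t 0"
          using straddle_lower_deriv_add_linear[of G t c "- c"] by simp
      qed
    qed
  qed
  then show ?thesis by (simp add: algebra_simps)
qed

section \<open>Leaky ReLU, losses and Clarke subgradients\<close>

lemma leaky_eq:
  assumes "0 < \<gamma>" "\<gamma> \<le> 1"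
  shows "leaky \<gamma> z = (if 0 \<le> z then z else \<gamma> * z)"
proof (cases "0 \<le> z")
  case True
  then have "\<gamma> * z \<le> z" using assms by (simp add: mult_left_le_one_le)
  then show ?thesis using True by (simp add: leaky_def)
next
  case False
  then have "z \<le> \<gamma> * z" using assms by (simp add: mult_le_cancel_right1)
  then show ?thesis using False by (simp add: leaky_def)
qed

lemma leaky_increment_bounds:
  assumes "0 < \<gamma>" "\<gamma> \<le> 1" "p \<le> q"
  shows "\<gamma> * (q - p) \<le> leaky \<gamma> q - leaky \<gamma> p" "leaky \<gamma> q - leaky \<gamma> p \<le> q - p"
proof -
  have lin: "\<gamma> * z \<le> z" if "0 \<le> z" for z using assms that by (simp add: mult_left_le_one_le)
  have neg: "z \<le> \<gamma> * z" if "z < 0" for z using assms that by (simp add: mult_le_cancel_right1)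
  have "\<gamma> * (q - p) \<le> leaky \<gamma> q - leaky \<gamma> p \<and> leaky \<gamma> q - leaky \<gamma> p \<le> q - p"
    using lin[of q] lin[of "q - p"] neg[of p] assms(3)
    unfolding leaky_eq[OF assms(1,2)] by (auto simp: algebra_simps)
  then show "\<gamma> * (q - p) \<le> leaky \<gamma> q - leaky \<gamma> p" "leaky \<gamma> q - leaky \<gamma> p \<le> q - p"
    by auto
qed

lemma leaky_secant_slope:
  assumes "0 < \<gamma>" "\<gamma> \<le> 1"
  obtains c where "\<gamma> \<le> c" "c \<le> 1" "leaky \<gamma> q - leaky \<gamma> p = c * (q - p)"
proof (cases "p = q")
  case True
  then show thesis using assms by (intro that[of 1]) auto
next
  case False
  define c where "c = (leaky \<gamma> q - leaky \<gamma> p) / (q - p)"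
  have c_eq: "leaky \<gamma> q - leaky \<gamma> p = c * (q - p)" "leaky \<gamma> p - leaky \<gamma> q = c * (p - q)"
    using False by (simp_all add: c_def field_simps)
  have "\<gamma> * \<bar>q - p\<bar> \<le> c * \<bar>q - p\<bar> \<and> c * \<bar>q - p\<bar> \<le> 1 * \<bar>q - p\<bar>"
  proof (cases "p < q")
    case True
    then show ?thesis using leaky_increment_bounds[OF assms, of p q] c_eq by simp
  next
    case False
    then show ?thesis using leaky_increment_bounds[OF assms, of q p] c_eq by simp
  qed
  then have "\<gamma> \<le> c" "c \<le> 1"
    using \<open>p \<noteq> q\<close> by (simp_all add: mult_le_cancel_right)
  then show thesis using c_eq(1) by (rule that)
qed

lemma leaky_lipschitz:
  assumes "0 < \<gamma>" "\<gamma> \<le> 1"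
  shows "\<bar>leaky \<gamma> q - leaky \<gamma> p\<bar> \<le> \<bar>q - p\<bar>"
proof -
  obtain c where c: "\<gamma> \<le> c" "c \<le> 1" "leaky \<gamma> q - leaky \<gamma> p = c * (q - p)"
    using leaky_secant_slope[OF assms] .
  have "c * \<bar>q - p\<bar> \<le> \<bar>q - p\<bar>" using c(1,2) assms(1) by (intro mult_left_le_one_le) auto
  then show ?thesis using c assms by (simp add: abs_mult)
qed

lemma min_le_mult_between:
  fixes w :: real
  assumes "\<gamma> \<le> c" "c \<le> 1"
  shows "min w (\<gamma> * w) \<le> c * w"
proof (cases "w \<ge> 0")
  case True
  then show ?thesis using mult_right_mono[OF assms(1) True] by simp
next
  case False
  have "1 * w \<le> c * w" using False by (intro mult_right_mono_neg[OF assms(2)]) simp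
  then show ?thesis by simp
qed

lemma straddle_lower_deriv_scaled_leaky:
  assumes "(z has_real_derivative z') (at t)" "0 < \<gamma>" "\<gamma> \<le> 1"
  shows "straddle_lower_deriv (\<lambda>\<tau>. s * leaky \<gamma> (z \<tau>)) t (min (s * z') (s * \<gamma> * z'))"
  unfolding straddle_lower_deriv_def
proof (intro allI impI)
  fix e :: real assume "e > 0"
  define e' where "e' = e / (\<bar>s\<bar> + 1)"
  have "e' > 0" using \<open>e > 0\<close> by (simp add: e'_def)
  have "\<bar>s\<bar> * e' \<le> e"
    using \<open>e > 0\<close> by (simp add: e'_def field_simps)
  obtain r where "r > 0"
    and r: "\<And>u v. u \<le> t \<Longrightarrow> t \<le> v \<Longrightarrow> v - u < r \<Longrightarrow> \<bar>z v - z u - z' * (v - u)\<bar> \<le> e' * (v - u)"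
    using has_real_derivative_straddle[OF assms(1) \<open>e' > 0\<close>] by blast
  have "(min (s * z') (s * \<gamma> * z') - e) * (v - u) \<le> s * leaky \<gamma> (z v) - s * leaky \<gamma> (z u)"
    if uv: "u \<le> t" "t \<le> v" "v - u < r" for u v
  proof -
    define E where "E = z v - z u - z' * (v - u)"
    obtain c where c: "\<gamma> \<le> c" "c \<le> 1" "leaky \<gamma> (z v) - leaky \<gamma> (z u) = c * (z v - z u)"
      using leaky_secant_slope[OF assms(2,3)] .
    have "s * leaky \<gamma> (z v) - s * leaky \<gamma> (z u) = s * (c * (z v - z u))"
      unfolding c(3)[symmetric] by (simp add: right_diff_distrib)
    also have "\<dots> = c * (s * z') * (v - u) + c * (s * E)"
      by (simp add: E_def algebra_simps)
    finally have eq: "s * leaky \<gamma> (z v) - s * leaky \<gamma> (z u) = c * (s * z') * (v - u) + c * (s * E)" .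
    have "min (s * z') (s * \<gamma> * z') \<le> c * (s * z')"
      using min_le_mult_between[OF c(1,2), of "s * z'"] by (simp add: ac_simps)
    then have lin: "min (s * z') (s * \<gamma> * z') * (v - u) \<le> c * (s * z') * (v - u)"
      using uv by (intro mult_right_mono) auto
    have "\<bar>c * (s * E)\<bar> \<le> \<bar>s\<bar> * \<bar>E\<bar>"
      using c assms(2) by (simp add: abs_mult mult_left_le_one_le)
    also have "\<dots> \<le> \<bar>s\<bar> * (e' * (v - u))"
      using r[OF uv] unfolding E_def by (intro mult_left_mono) auto
    also have "\<dots> \<le> e * (v - u)"
      using \<open>\<bar>s\<bar> * e' \<le> e\<close> uv by (simp add: mult.assoc[symmetric] mult_right_mono)
    finally have "- (e * (v - u)) \<le> c * (s * E)" by linarith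
    then show ?thesis
      using lin unfolding eq by (simp add: left_diff_distrib)
  qed
  then show "\<exists>r>0. \<forall>u v. u \<le> t \<longrightarrow> t \<le> v \<longrightarrow> v - u < r \<longrightarrow>
      (min (s * z') (s * \<gamma> * z') - e) * (v - u) \<le> s * leaky \<gamma> (z v) - s * leaky \<gamma> (z u)"
    using \<open>r > 0\<close> by blast
qed

lemma exponential_or_logistic_loss:
  assumes "lossf = (\<lambda>q. exp (- q)) \<or> lossf = (\<lambda>q. ln (1 + exp (- q)))"
  obtains h where "\<And>q. (lossf has_real_derivative - h q) (at q)" "\<And>q. h q > 0"
    "\<And>p q. p \<le> q \<Longrightarrow> h q \<le> h p" "\<And>q. isCont h q" "\<And>q. lossf q \<le> exp (- q)"
  using assms
proof
  assume l: "lossf = (\<lambda>q. exp (- q))"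
  show thesis
  proof (rule that[of "\<lambda>q. exp (- q)"])
    show "(lossf has_real_derivative - exp (- q)) (at q)" for q
      unfolding l by (auto intro!: derivative_eq_intros)
    show "isCont (\<lambda>q. exp (- q)) q" for q :: real
      by (intro continuous_intros)
  qed (simp_all add: l)
next
  assume l: "lossf = (\<lambda>q. ln (1 + exp (- q)))"
  have pos: "1 + exp q > 0" for q :: real by (simp add: add_pos_pos)
  show thesis
  proof (rule that[of "\<lambda>q. 1 / (1 + exp q)"])
    fix q :: real
    have "(lossf has_real_derivative (1 / (1 + exp (- q))) * (exp (- q) * (- 1))) (at q)"
      unfolding l by (rule derivative_eq_intros refl | simp add: add_pos_pos)+
    moreover have "(1 / (1 + exp (- q))) * (exp (- q) * (- 1)) = - (1 / (1 + exp q))"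
      using pos[of q] by (simp add: exp_minus field_simps)
    ultimately show "(lossf has_real_derivative - (1 / (1 + exp q))) (at q)" by simp
    show "1 / (1 + exp q) > 0" using pos[of q] by simp
    show "isCont (\<lambda>q. 1 / (1 + exp q)) q"
      using pos[of q] by (intro continuous_intros) auto
    show "lossf q \<le> exp (- q)" unfolding l by (rule ln_add_one_self_le_self) simp
  next
    fix p q :: real assume "p \<le> q"
    then show "1 / (1 + exp q) \<le> 1 / (1 + exp p)"
      using pos by (intro divide_left_mono) (auto simp: add_pos_pos)
  qed
qed

lemma tangent_bound_of_antimono_deriv:
  fixes l h :: "real \<Rightarrow> real"
  assumes der: "\<And>q. (l has_real_derivative - h q) (at q)"
    and anti: "\<And>p q. p \<le> q \<Longrightarrow> h q \<le> h p"
  shows "l Q - l q \<le> h Q * (q - Q)"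
proof (cases q Q rule: linorder_cases)
  case less
  obtain z where z: "q < z" "z < Q" "l Q - l q = (Q - q) * (- h z)"
    using MVT2[OF less, of l "\<lambda>x. - h x"] der by blast
  have "(Q - q) * h Q \<le> (Q - q) * h z" using anti z less by (intro mult_left_mono) auto
  then show ?thesis using z(3) by (simp add: algebra_simps)
next
  case greater
  obtain z where z: "Q < z" "z < q" "l q - l Q = (q - Q) * (- h z)"
    using MVT2[OF greater, of l "\<lambda>x. - h x"] der by blast
  have "(q - Q) * h z \<le> (q - Q) * h Q" using anti z greater by (intro mult_left_mono) auto
  then show ?thesis using z(3) by (simp add: algebra_simps)
qed simp

lemma clarke_subdiff_inner_le:
  fixes L :: "'a::euclidean_space \<Rightarrow> real"
  assumes grad: "\<And>V g. (L has_derivative (\<lambda>H. g \<bullet> H)) (at V) \<Longrightarrow> g \<bullet> U \<le> B V"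
    and cont: "\<And>Vs. Vs \<longlonglongrightarrow> V0 \<Longrightarrow> (\<lambda>k. B (Vs k)) \<longlonglongrightarrow> B V0"
    and "v \<in> clarke_subdiff L V0"
  shows "v \<bullet> U \<le> B V0"
proof -
  have "{v. \<exists>Vs gs. Vs \<longlonglongrightarrow> V0 \<and> (\<forall>k. (L has_derivative (\<lambda>H. gs k \<bullet> H)) (at (Vs k))) \<and> gs \<longlonglongrightarrow> v}
      \<subseteq> {v. U \<bullet> v \<le> B V0}"
  proof clarify
    fix v Vs gs assume lim: "Vs \<longlonglongrightarrow> V0" "gs \<longlonglongrightarrow> v"
      and der: "\<forall>k. (L has_derivative (\<lambda>H. gs k \<bullet> H)) (at (Vs k))"
    have "(\<lambda>k. gs k \<bullet> U) \<longlonglongrightarrow> v \<bullet> U" by (intro tendsto_intros lim(2))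
    then have "v \<bullet> U \<le> B V0"
      using cont[OF lim(1)] grad der by (intro LIMSEQ_le) auto
    then show "U \<bullet> v \<le> B V0" by (simp add: inner_commute)
  qed
  then have "clarke_subdiff L V0 \<subseteq> {v. U \<bullet> v \<le> B V0}"
    unfolding clarke_subdiff_def by (intro hull_minimal convex_halfspace_le)
  then show ?thesis using assms(3) by (auto simp: inner_commute)
qed

section \<open>Margins of the network\<close>

definition margin :: "real \<Rightarrow> ('m::finite \<Rightarrow> real) \<Rightarrow> ('n \<Rightarrow> real^'d) \<Rightarrow> ('n \<Rightarrow> real)
    \<Rightarrow> 'n \<Rightarrow> real^'d^'m \<Rightarrow> real" where
  "margin \<gamma> a x y i W = y i * net \<gamma> a W (x i)"

lemma emp_loss_eq_sum_margin:
  "emp_loss lossf \<gamma> a x y W = (\<Sum>i\<in>UNIV. lossf (margin \<gamma> a x y i W)) / real CARD('n)"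
  for x :: "'n::finite \<Rightarrow> real^'d"
  by (simp add: emp_loss_def margin_def)

lemma margin_tendsto:
  "(f \<longlongrightarrow> W0) F \<Longrightarrow> ((\<lambda>\<tau>. margin \<gamma> a x y i (f \<tau>)) \<longlongrightarrow> margin \<gamma> a x y i W0) F"
  unfolding margin_def net_def leaky_def by (intro tendsto_intros)

locale leaky_network =
  fixes \<gamma> :: real and a :: "'m::finite \<Rightarrow> real" and x :: "'n::finite \<Rightarrow> real^'d" and y :: "'n \<Rightarrow> real"
  assumes gamma: "0 < \<gamma>" "\<gamma> \<le> 1"
    and a_sq_sum: "(\<Sum>j\<in>UNIV. (a j)\<^sup>2) = 1"
    and y_sign: "\<And>k. y k = 1 \<or> y k = -1"
begin

text \<open>Moving neuron \<open>j\<close> along \<open>y\<^sub>i a\<^sub>j c\<^sub>j x\<^sub>i\<close>; with \<open>c\<^sub>j\<close> the active slope of neuron \<open>j\<close> on \<open>x\<^sub>i\<close> this is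
  the gradient of the \<open>i\<close>-th margin.\<close>
definition margin_direction :: "('m \<Rightarrow> real) \<Rightarrow> 'n \<Rightarrow> real^'d^'m" where
  "margin_direction c i = (\<chi> j. (y i * a j * c j) *\<^sub>R x i)"

lemma margin_increment:
  obtains cc where "\<And>j. \<gamma> \<le> cc j \<and> cc j \<le> 1"
    "margin \<gamma> a x y k (W + s *\<^sub>R margin_direction c i) - margin \<gamma> a x y k W
      = s * (y k * y i * (x i \<bullet> x k)) * (\<Sum>j\<in>UNIV. (a j)\<^sup>2 * (c j * cc j))"
proof -
  define U where "U = margin_direction c i"
  have shift: "(W + s *\<^sub>R U) $ j \<bullet> x k = W $ j \<bullet> x k + s * (y i * a j * c j) * (x i \<bullet> x k)" for j
    by (simp add: U_def margin_direction_def algebra_simps)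
  have "\<forall>j. \<exists>c'. \<gamma> \<le> c' \<and> c' \<le> 1 \<and>
      leaky \<gamma> ((W + s *\<^sub>R U) $ j \<bullet> x k) - leaky \<gamma> (W $ j \<bullet> x k) = c' * (s * (y i * a j * c j) * (x i \<bullet> x k))"
  proof
    fix j
    obtain c' where "\<gamma> \<le> c'" "c' \<le> 1" and
      "leaky \<gamma> ((W + s *\<^sub>R U) $ j \<bullet> x k) - leaky \<gamma> (W $ j \<bullet> x k) = c' * ((W + s *\<^sub>R U) $ j \<bullet> x k - W $ j \<bullet> x k)"
      by (rule leaky_secant_slope[OF gamma])
    then show "\<exists>c'. \<gamma> \<le> c' \<and> c' \<le> 1 \<and>
      leaky \<gamma> ((W + s *\<^sub>R U) $ j \<bullet> x k) - leaky \<gamma> (W $ j \<bullet> x k) = c' * (s * (y i * a j * c j) * (x i \<bullet> x k))"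
      unfolding shift by auto
  qed
  from choice[OF this] obtain cc where cc: "\<And>j. \<gamma> \<le> cc j \<and> cc j \<le> 1"
    "\<And>j. leaky \<gamma> ((W + s *\<^sub>R U) $ j \<bullet> x k) - leaky \<gamma> (W $ j \<bullet> x k) = cc j * (s * (y i * a j * c j) * (x i \<bullet> x k))"
    by blast
  have "margin \<gamma> a x y k (W + s *\<^sub>R U) - margin \<gamma> a x y k W
      = y k * (\<Sum>j\<in>UNIV. a j * (leaky \<gamma> ((W + s *\<^sub>R U) $ j \<bullet> x k) - leaky \<gamma> (W $ j \<bullet> x k)))"
    by (simp add: margin_def net_def right_diff_distrib sum_subtractf)
  also have "\<dots> = s * (y k * y i * (x i \<bullet> x k)) * (\<Sum>j\<in>UNIV. (a j)\<^sup>2 * (c j * cc j))"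
    by (simp only: cc(2)) (simp add: sum_distrib_left power2_eq_square mult_ac)
  finally show thesis using cc(1) that unfolding U_def by blast
qed

lemma weighted_slope_bounds:
  assumes "\<And>j. \<gamma> \<le> c j \<and> c j \<le> 1" "\<And>j. \<gamma> \<le> cc j \<and> cc j \<le> 1"
  shows "\<gamma>\<^sup>2 \<le> (\<Sum>j\<in>UNIV. (a j)\<^sup>2 * (c j * cc j))" "(\<Sum>j\<in>UNIV. (a j)\<^sup>2 * (c j * cc j)) \<le> 1"
proof -
  have "\<gamma> * \<gamma> \<le> c j * cc j" "c j * cc j \<le> 1 * 1" for j
    using assms[of j] gamma by (intro mult_mono; simp)+
  then have "(a j)\<^sup>2 * \<gamma>\<^sup>2 \<le> (a j)\<^sup>2 * (c j * cc j)" "(a j)\<^sup>2 * (c j * cc j) \<le> (a j)\<^sup>2 * 1" for j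
    by (intro mult_left_mono; simp add: power2_eq_square)+
  then have "(\<Sum>j\<in>UNIV. (a j)\<^sup>2 * \<gamma>\<^sup>2) \<le> (\<Sum>j\<in>UNIV. (a j)\<^sup>2 * (c j * cc j))"
    "(\<Sum>j\<in>UNIV. (a j)\<^sup>2 * (c j * cc j)) \<le> (\<Sum>j\<in>UNIV. (a j)\<^sup>2)"
    by (intro sum_mono; simp)+
  then show "\<gamma>\<^sup>2 \<le> (\<Sum>j\<in>UNIV. (a j)\<^sup>2 * (c j * cc j))" "(\<Sum>j\<in>UNIV. (a j)\<^sup>2 * (c j * cc j)) \<le> 1"
    by (simp_all add: a_sq_sum sum_distrib_right[symmetric])
qed

lemma margin_increment_self:
  assumes "s \<ge> 0" "\<And>j. \<gamma> \<le> c j \<and> c j \<le> 1"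
  shows "s * (\<gamma>\<^sup>2 * (norm (x i))\<^sup>2)
    \<le> margin \<gamma> a x y i (W + s *\<^sub>R margin_direction c i) - margin \<gamma> a x y i W"
proof -
  obtain cc where cc: "\<And>j. \<gamma> \<le> cc j \<and> cc j \<le> 1"
    and eq: "margin \<gamma> a x y i (W + s *\<^sub>R margin_direction c i) - margin \<gamma> a x y i W
      = s * (y i * y i * (x i \<bullet> x i)) * (\<Sum>j\<in>UNIV. (a j)\<^sup>2 * (c j * cc j))"
    using margin_increment[where k = i and i = i and W = W and s = s and c = c] by blast
  have "y i * y i = 1" using y_sign[of i] by auto
  have "s * (\<gamma>\<^sup>2 * (norm (x i))\<^sup>2) = (s * (norm (x i))\<^sup>2) * \<gamma>\<^sup>2"
    by (simp add: mult_ac)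
  also have "\<dots> \<le> (s * (norm (x i))\<^sup>2) * (\<Sum>j\<in>UNIV. (a j)\<^sup>2 * (c j * cc j))"
    using weighted_slope_bounds(1)[of c cc, OF assms(2) cc] assms(1) by (intro mult_left_mono) auto
  also have "\<dots> = margin \<gamma> a x y i (W + s *\<^sub>R margin_direction c i) - margin \<gamma> a x y i W"
    unfolding eq \<open>y i * y i = 1\<close> by (simp add: power2_norm_eq_inner)
  finally show ?thesis .
qed

lemma margin_increment_other:
  assumes "s \<ge> 0" "\<And>j. \<gamma> \<le> c j \<and> c j \<le> 1"
  shows "\<bar>margin \<gamma> a x y k (W + s *\<^sub>R margin_direction c i) - margin \<gamma> a x y k W\<bar> \<le> s * \<bar>x i \<bullet> x k\<bar>"
proof -
  obtain cc where cc: "\<And>j. \<gamma> \<le> cc j \<and> cc j \<le> 1"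
    and eq: "margin \<gamma> a x y k (W + s *\<^sub>R margin_direction c i) - margin \<gamma> a x y k W
      = s * (y k * y i * (x i \<bullet> x k)) * (\<Sum>j\<in>UNIV. (a j)\<^sup>2 * (c j * cc j))"
    using margin_increment[where k = k and i = i and W = W and s = s and c = c] by blast
  have "\<bar>y k * y i\<bar> = 1" using y_sign[of k] y_sign[of i] by auto
  moreover have "\<bar>\<Sum>j\<in>UNIV. (a j)\<^sup>2 * (c j * cc j)\<bar> \<le> 1"
    using weighted_slope_bounds[of c cc, OF assms(2) cc] zero_le_power2[of \<gamma>] unfolding abs_le_iff by linarith
  ultimately show ?thesis
    using assms(1) unfolding eq by (simp add: abs_mult mult_left_le)
qed

lemma margin_lipschitz:
  "\<bar>margin \<gamma> a x y i V - margin \<gamma> a x y i V'\<bar> \<le> (\<Sum>j\<in>UNIV. \<bar>a j\<bar>) * norm (x i) * norm (V - V')"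
proof -
  have "\<bar>margin \<gamma> a x y i V - margin \<gamma> a x y i V'\<bar>
      = \<bar>\<Sum>j\<in>UNIV. a j * (leaky \<gamma> (V $ j \<bullet> x i) - leaky \<gamma> (V' $ j \<bullet> x i))\<bar>"
    using y_sign[of i] by (auto simp: margin_def net_def right_diff_distrib sum_subtractf abs_minus_commute)
  also have "\<dots> \<le> (\<Sum>j\<in>UNIV. \<bar>a j\<bar> * (norm (x i) * norm (V - V')))"
  proof (rule order.trans[OF sum_abs sum_mono])
    fix j
    have "\<bar>leaky \<gamma> (V $ j \<bullet> x i) - leaky \<gamma> (V' $ j \<bullet> x i)\<bar> \<le> \<bar>(V - V') $ j \<bullet> x i\<bar>"
      using leaky_lipschitz[OF gamma] by (simp add: inner_diff_left)
    also have "\<dots> \<le> norm ((V - V') $ j) * norm (x i)" by (rule Cauchy_Schwarz_ineq2)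
    also have "\<dots> \<le> norm (x i) * norm (V - V')"
      using Finite_Cartesian_Product.norm_nth_le[of "V - V'" j] by (simp add: mult.commute mult_left_mono)
    finally show "\<bar>a j * (leaky \<gamma> (V $ j \<bullet> x i) - leaky \<gamma> (V' $ j \<bullet> x i))\<bar> \<le> \<bar>a j\<bar> * (norm (x i) * norm (V - V'))"
      by (simp add: abs_mult mult_left_mono)
  qed
  also have "\<dots> = (\<Sum>j\<in>UNIV. \<bar>a j\<bar>) * norm (x i) * norm (V - V')"
    by (simp add: sum_distrib_right mult.assoc)
  finally show ?thesis .
qed

end

section \<open>Growth of the margins along the gradient flow\<close>

locale leaky_network_training = leaky_network \<gamma> a x y
  for \<gamma> :: real and a :: "'m::finite \<Rightarrow> real" and x :: "'n::finite \<Rightarrow> real^'d" and y :: "'n \<Rightarrow> real" +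
  fixes lossf h :: "real \<Rightarrow> real" and \<epsilon> :: real
  assumes loss_deriv: "\<And>q. (lossf has_real_derivative - h q) (at q)"
    and h_pos: "\<And>q. h q > 0"
    and h_antimono: "\<And>p q. p \<le> q \<Longrightarrow> h q \<le> h p"
    and h_cont: "\<And>q. isCont h q"
    and inner_le: "\<And>i k. i \<noteq> k \<Longrightarrow> \<bar>x i \<bullet> x k\<bar> \<le> \<epsilon>"
    and eps_nonneg: "\<epsilon> \<ge> 0"
begin

text \<open>Lower bound for the speed at which the \<open>i\<close>-th margin grows: the sample itself contributes at
  least \<open>\<gamma>\<^sup>2 \<parallel>x\<^sub>i\<parallel>\<^sup>2\<close> times its loss weight, every other sample costs at most \<open>\<epsilon>\<close> times its weight.\<close>
definition descent_rate :: "'n \<Rightarrow> real^'d^'m \<Rightarrow> real" where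
  "descent_rate i W = (\<gamma>\<^sup>2 * (norm (x i))\<^sup>2 * h (margin \<gamma> a x y i W)
     - \<epsilon> * (\<Sum>k\<in>UNIV - {i}. h (margin \<gamma> a x y k W))) / real CARD('n)"

lemma descent_rate_tendsto:
  "(f \<longlongrightarrow> W0) F \<Longrightarrow> ((\<lambda>\<tau>. descent_rate i (f \<tau>)) \<longlongrightarrow> descent_rate i W0) F"
  unfolding descent_rate_def
  by (intro tendsto_intros isCont_tendsto_compose[OF h_cont] margin_tendsto) simp_all

lemma emp_loss_difference_quotient_le:
  assumes "s > 0" "\<And>j. \<gamma> \<le> c j \<and> c j \<le> 1"
  shows "(emp_loss lossf \<gamma> a x y (W + s *\<^sub>R margin_direction c i) - emp_loss lossf \<gamma> a x y W) / s
    \<le> - descent_rate i (W + s *\<^sub>R margin_direction c i)"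
proof -
  define U where "U = margin_direction c i"
  let ?q = "\<lambda>k. margin \<gamma> a x y k W" and ?Q = "\<lambda>k. margin \<gamma> a x y k (W + s *\<^sub>R U)"
  have tangent: "lossf (?Q k) - lossf (?q k) \<le> - (h (?Q k) * (?Q k - ?q k))" for k
    using tangent_bound_of_antimono_deriv[OF loss_deriv h_antimono, of "?Q k" "?q k"]
    by (simp add: algebra_simps)
  have self: "- (h (?Q i) * (?Q i - ?q i)) \<le> - (h (?Q i) * (s * (\<gamma>\<^sup>2 * (norm (x i))\<^sup>2)))"
    using margin_increment_self[OF less_imp_le[OF assms(1)] assms(2), of i W] h_pos[of "?Q i"]
    unfolding U_def by simp
  have other: "- (h (?Q k) * (?Q k - ?q k)) \<le> h (?Q k) * (s * \<epsilon>)" if "k \<noteq> i" for k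
  proof -
    have "\<bar>?Q k - ?q k\<bar> \<le> s * \<bar>x i \<bullet> x k\<bar>"
      unfolding U_def by (rule margin_increment_other) (use assms in auto)
    also have "\<dots> \<le> s * \<epsilon>"
      using inner_le[of i k] that assms(1) by (intro mult_left_mono) auto
    finally have "?q k - ?Q k \<le> s * \<epsilon>" by linarith
    from mult_left_mono[OF this less_imp_le[OF h_pos[of "?Q k"]]] show ?thesis
      by (simp add: algebra_simps)
  qed
  have "emp_loss lossf \<gamma> a x y (W + s *\<^sub>R U) - emp_loss lossf \<gamma> a x y W
      = (\<Sum>k\<in>UNIV. lossf (?Q k) - lossf (?q k)) / real CARD('n)"
    unfolding emp_loss_eq_sum_margin by (simp add: sum_subtractf diff_divide_distrib)
  also have "\<dots> \<le> (\<Sum>k\<in>UNIV. - (h (?Q k) * (?Q k - ?q k))) / real CARD('n)"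
    by (intro divide_right_mono sum_mono tangent) simp
  also have "(\<Sum>k\<in>UNIV. - (h (?Q k) * (?Q k - ?q k)))
      = - (h (?Q i) * (?Q i - ?q i)) + (\<Sum>k\<in>UNIV - {i}. - (h (?Q k) * (?Q k - ?q k)))"
    by (simp add: sum.remove)
  also have "\<dots> \<le> - (h (?Q i) * (s * (\<gamma>\<^sup>2 * (norm (x i))\<^sup>2))) + (\<Sum>k\<in>UNIV - {i}. h (?Q k) * (s * \<epsilon>))"
    using self other by (intro add_mono sum_mono) auto
  also have "\<dots> = s * - (\<gamma>\<^sup>2 * (norm (x i))\<^sup>2 * h (?Q i) - \<epsilon> * (\<Sum>k\<in>UNIV - {i}. h (?Q k)))"
    by (simp add: sum_distrib_left sum_distrib_right algebra_simps)
  finally show ?thesis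
    using assms(1) unfolding U_def by (simp add: descent_rate_def divide_le_eq field_simps)
qed

lemma gradient_inner_margin_direction_le:
  assumes "\<And>j. \<gamma> \<le> c j \<and> c j \<le> 1"
    and grad: "(emp_loss lossf \<gamma> a x y has_derivative (\<lambda>H. g \<bullet> H)) (at W)"
  shows "g \<bullet> margin_direction c i \<le> - descent_rate i W"
proof -
  let ?L = "emp_loss lossf \<gamma> a x y" and ?U = "margin_direction c i"
  have "((\<lambda>s. W + s *\<^sub>R ?U) has_derivative (\<lambda>s. s *\<^sub>R ?U)) (at 0)"
    by (auto intro!: derivative_eq_intros)
  moreover have "(?L has_derivative (\<lambda>H. g \<bullet> H)) (at (W + 0 *\<^sub>R ?U))"
    using grad by simp
  ultimately have "((\<lambda>s. ?L (W + s *\<^sub>R ?U)) has_derivative (\<lambda>s. g \<bullet> (s *\<^sub>R ?U))) (at 0)"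
    by (rule has_derivative_compose)
  moreover have "(\<lambda>s. g \<bullet> (s *\<^sub>R ?U)) = (*) (g \<bullet> ?U)"
    by (auto simp: fun_eq_iff)
  ultimately have "((\<lambda>s. ?L (W + s *\<^sub>R ?U)) has_real_derivative g \<bullet> ?U) (at 0)"
    by (simp add: has_field_derivative_def)
  then have quotient: "((\<lambda>s. (?L (W + s *\<^sub>R ?U) - ?L W) / s) \<longlongrightarrow> g \<bullet> ?U) (at_right 0)"
    unfolding has_field_derivative_iff by (auto intro: tendsto_within_subset)
  have rate: "((\<lambda>s. - descent_rate i (W + s *\<^sub>R ?U)) \<longlongrightarrow> - descent_rate i W) (at_right 0)"
  proof (intro tendsto_minus descent_rate_tendsto)
    have "((\<lambda>s. W + s *\<^sub>R ?U) \<longlongrightarrow> W + 0 *\<^sub>R ?U) (at_right 0)"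
      by (intro tendsto_intros)
    then show "((\<lambda>s. W + s *\<^sub>R ?U) \<longlongrightarrow> W) (at_right 0)" by simp
  qed
  have "\<forall>\<^sub>F s in at_right 0. (?L (W + s *\<^sub>R ?U) - ?L W) / s \<le> - descent_rate i (W + s *\<^sub>R ?U)"
    using eventually_at_right_less[of "0 :: real"]
  proof eventually_elim
    case (elim s)
    show ?case by (rule emp_loss_difference_quotient_le) (use elim assms(1) in auto)
  qed
  then show ?thesis
    by (rule tendsto_le[OF trivial_limit_at_right_real rate quotient])
qed

lemma margin_straddle_lower_deriv:
  assumes W': "(W has_vector_derivative V) (at t)"
    and clarke: "- V \<in> clarke_subdiff (emp_loss lossf \<gamma> a x y) (W t)"
  shows "straddle_lower_deriv (\<lambda>\<tau>. margin \<gamma> a x y i (W \<tau>)) t (descent_rate i (W t))"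
proof -
  define z' where "z' j = V $ j \<bullet> x i" for j
  define s where "s j = y i * a j" for j
  define c where "c j = (if s j * z' j \<le> s j * \<gamma> * z' j then 1 else \<gamma>)" for j
  have "((\<lambda>\<tau>. W \<tau> $ j \<bullet> x i) has_real_derivative z' j) (at t)" for j
  proof -
    have "bounded_linear (\<lambda>M::real^'d^'m. M $ j \<bullet> x i)"
      by (rule bounded_linear_compose[OF bounded_linear_inner_left bounded_linear_vec_nth])
    from bounded_linear.has_vector_derivative[OF this W'] show ?thesis
      unfolding has_real_derivative_iff_has_vector_derivative z'_def .
  qed
  then have "straddle_lower_deriv (\<lambda>\<tau>. \<Sum>j\<in>UNIV. s j * leaky \<gamma> (W \<tau> $ j \<bullet> x i)) t
      (\<Sum>j\<in>UNIV. min (s j * z' j) (s j * \<gamma> * z' j))"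
    by (intro straddle_lower_deriv_sum straddle_lower_deriv_scaled_leaky gamma) auto
  moreover have "(\<lambda>\<tau>. \<Sum>j\<in>UNIV. s j * leaky \<gamma> (W \<tau> $ j \<bullet> x i)) = (\<lambda>\<tau>. margin \<gamma> a x y i (W \<tau>))"
    by (simp add: margin_def net_def sum_distrib_left mult.assoc s_def)
  moreover have "(\<Sum>j\<in>UNIV. min (s j * z' j) (s j * \<gamma> * z' j)) = V \<bullet> margin_direction c i"
  proof -
    have "min (s j * z' j) (s j * \<gamma> * z' j) = (y i * a j * c j) * z' j" for j
      by (simp add: c_def s_def min_def)
    then show ?thesis
      by (simp add: inner_vec_def[of V] margin_direction_def z'_def mult.commute)
  qed
  moreover have "descent_rate i (W t) \<le> V \<bullet> margin_direction c i"
  proof -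
    have "(- V) \<bullet> margin_direction c i \<le> - descent_rate i (W t)"
    proof (rule clarke_subdiff_inner_le[OF _ _ clarke])
      show "g \<bullet> margin_direction c i \<le> - descent_rate i W'"
        if "(emp_loss lossf \<gamma> a x y has_derivative (\<lambda>H. g \<bullet> H)) (at W')" for W' g
        using gradient_inner_margin_direction_le[OF _ that] gamma by (simp add: c_def)
      show "(\<lambda>k. - descent_rate i (Vs k)) \<longlonglongrightarrow> - descent_rate i (W t)" if "Vs \<longlonglongrightarrow> W t" for Vs
        using that by (intro tendsto_minus descent_rate_tendsto)
    qed
    then show ?thesis by simp
  qed
  ultimately show ?thesis
    by (auto intro: straddle_lower_deriv_mono)
qed

lemma min_margin_straddle_lower_deriv:
  assumes W': "(W has_vector_derivative V) (at t)"
    and clarke: "- V \<in> clarke_subdiff (emp_loss lossf \<gamma> a x y) (W t)"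
    and norm_ge: "\<And>i. \<rho> \<le> norm (x i)" and "\<rho> \<ge> 0"
  shows "straddle_lower_deriv (\<lambda>\<tau>. Min (range (\<lambda>i. margin \<gamma> a x y i (W \<tau>)))) t
     ((\<gamma>\<^sup>2 * \<rho>\<^sup>2 - (real CARD('n) - 1) * \<epsilon>) / real CARD('n) * h (Min (range (\<lambda>i. margin \<gamma> a x y i (W t)))))"
proof (rule straddle_lower_deriv_Min)
  show "\<forall>i\<in>UNIV. isCont (\<lambda>\<tau>. margin \<gamma> a x y i (W \<tau>)) t"
    using has_vector_derivative_continuous[OF W'] by (auto simp: isCont_def continuous_at intro: margin_tendsto)
next
  fix i assume "\<forall>j\<in>UNIV. margin \<gamma> a x y i (W t) \<le> margin \<gamma> a x y j (W t)"
  then have active: "margin \<gamma> a x y i (W t) = Min (range (\<lambda>i. margin \<gamma> a x y i (W t)))"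
    by (intro Min_eqI[symmetric]) auto
  define m where "m = Min (range (\<lambda>i. margin \<gamma> a x y i (W t)))"
  have "h (margin \<gamma> a x y k (W t)) \<le> h m" for k
    by (rule h_antimono) (simp add: m_def)
  then have "(\<Sum>k\<in>UNIV - {i}. h (margin \<gamma> a x y k (W t))) \<le> (real CARD('n) - 1) * h m"
    using sum_mono[of "UNIV - {i}" "\<lambda>k. h (margin \<gamma> a x y k (W t))" "\<lambda>_. h m"]
    by (simp add: card_Diff_singleton)
  then have "\<epsilon> * (\<Sum>k\<in>UNIV - {i}. h (margin \<gamma> a x y k (W t))) \<le> \<epsilon> * ((real CARD('n) - 1) * h m)"
    using eps_nonneg by (rule mult_left_mono)
  moreover have "\<gamma>\<^sup>2 * \<rho>\<^sup>2 * h m \<le> \<gamma>\<^sup>2 * (norm (x i))\<^sup>2 * h m"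
    using norm_ge[of i] \<open>\<rho> \<ge> 0\<close> h_pos[of m] by (intro mult_right_mono mult_left_mono power_mono) auto
  ultimately have "(\<gamma>\<^sup>2 * \<rho>\<^sup>2 - (real CARD('n) - 1) * \<epsilon>) * h m
      \<le> \<gamma>\<^sup>2 * (norm (x i))\<^sup>2 * h (margin \<gamma> a x y i (W t)) - \<epsilon> * (\<Sum>k\<in>UNIV - {i}. h (margin \<gamma> a x y k (W t)))"
    using active unfolding m_def[symmetric] by (simp add: algebra_simps)
  then have "(\<gamma>\<^sup>2 * \<rho>\<^sup>2 - (real CARD('n) - 1) * \<epsilon>) / real CARD('n) * h m \<le> descent_rate i (W t)"
    unfolding descent_rate_def by (simp add: divide_right_mono)
  then show "straddle_lower_deriv (\<lambda>\<tau>. margin \<gamma> a x y i (W \<tau>)) t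
     ((\<gamma>\<^sup>2 * \<rho>\<^sup>2 - (real CARD('n) - 1) * \<epsilon>) / real CARD('n) * h (Min (range (\<lambda>i. margin \<gamma> a x y i (W t)))))"
    using straddle_lower_deriv_mono[OF margin_straddle_lower_deriv[OF W' clarke, of i]]
    unfolding m_def by blast
qed simp_all

end

section \<open>Growth of the minimum margin\<close>

lemma eventually_gt_of_lower_rate:
  fixes F h :: "real \<Rightarrow> real" and \<kappa> M :: real
  assumes ac: "\<And>T. T \<ge> 0 \<Longrightarrow> abs_cont_on 0 T F" and "\<kappa> > 0"
    and h_pos: "\<And>q. h q > 0" and h_antimono: "\<And>p q. p \<le> q \<Longrightarrow> h q \<le> h p"
    and rate: "AE t in lborel. t \<ge> 0 \<longrightarrow> straddle_lower_deriv F t (\<kappa> * h (F t))"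
  shows "\<exists>T. \<forall>t\<ge>T. M < F t"
proof -
  have rate_on: "AE \<tau> in lborel. a \<le> \<tau> \<and> \<tau> \<le> b \<longrightarrow> straddle_lower_deriv F \<tau> (\<kappa> * h (F \<tau>))"
    if "0 \<le> a" for a b
    using rate by eventually_elim (use that in auto)
  have mono: "F s \<le> F t" if "0 \<le> s" "s \<le> t" for s t
  proof -
    have "abs_cont_on s t F"
      using abs_cont_on_subinterval[OF ac[of t], of s t] that by simp
    from abs_cont_on_lower_slope[OF this \<open>s \<le> t\<close> rate_on[OF \<open>0 \<le> s\<close>], of 0]
    show ?thesis using \<open>\<kappa> > 0\<close> h_pos by (simp add: less_imp_le)
  qed
  define c where "c = \<kappa> * h M"
  have "c > 0" using \<open>\<kappa> > 0\<close> h_pos[of M] by (simp add: c_def)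
  define T where "T = max 0 ((M - F 0) / c) + 1"
  have "T \<ge> 0" by (simp add: T_def)
  have "M - F 0 < c * T"
  proof -
    have "M - F 0 < c * ((M - F 0) / c + 1)" using \<open>c > 0\<close> by (simp add: field_simps)
    also have "\<dots> \<le> c * T" using \<open>c > 0\<close> by (intro mult_left_mono) (auto simp: T_def)
    finally show ?thesis .
  qed
  have "M < F T"
  proof (rule ccontr)
    assume "\<not> M < F T"
    then have "c \<le> \<kappa> * h (F \<tau>)" if "0 \<le> \<tau>" "\<tau> \<le> T" for \<tau>
      using mono[OF that] \<open>\<kappa> > 0\<close> h_antimono[of "F \<tau>" M] unfolding c_def by simp
    then have "c * (T - 0) \<le> F T - F 0"
      using abs_cont_on_lower_slope[OF ac[OF \<open>T \<ge> 0\<close>] \<open>T \<ge> 0\<close> rate_on[OF order_refl]] by blast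
    then show False using \<open>M - F 0 < c * T\<close> \<open>\<not> M < F T\<close> by simp
  qed
  then show ?thesis
    using mono \<open>T \<ge> 0\<close> by (intro exI[of _ T]) (auto intro: order.strict_trans2)
qed

lemma separation_rate_pos:
  fixes \<gamma> \<rho> R \<epsilon> n :: real
  assumes "0 < \<gamma>" "\<gamma> \<le> 1" "0 < \<rho>" "\<rho> \<le> R" "0 \<le> \<epsilon>" "1 \<le> n"
    and sep: "\<rho>\<^sup>2 \<ge> 3 * \<gamma> powr (-3) * (R / \<rho>)\<^sup>2 * n * \<epsilon>"
  shows "(n - 1) * \<epsilon> < \<gamma>\<^sup>2 * \<rho>\<^sup>2"
proof -
  have "\<gamma> powr (-3) = 1 / \<gamma> ^ 3"
    using \<open>0 < \<gamma>\<close> by (simp add: powr_minus divide_inverse powr_realpow)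
  have "1 \<le> 1 / \<gamma>" "1 \<le> (R / \<rho>)\<^sup>2"
    using assms(1-4) by (simp_all add: field_simps)
  then have "1 * (1 * (n * \<epsilon>)) \<le> (1 / \<gamma>) * ((R / \<rho>)\<^sup>2 * (n * \<epsilon>))"
    using assms(1,5,6) by (intro mult_mono) auto
  also have "\<dots> = \<gamma>\<^sup>2 * (\<gamma> powr (-3) * (R / \<rho>)\<^sup>2 * n * \<epsilon>)"
    using \<open>0 < \<gamma>\<close> unfolding \<open>\<gamma> powr (-3) = 1 / \<gamma> ^ 3\<close> by (simp add: power2_eq_square power3_eq_cube)
  also have "\<dots> \<le> \<gamma>\<^sup>2 * (\<rho>\<^sup>2 / 3)"
    using sep by (intro mult_left_mono) auto
  finally have "n * \<epsilon> \<le> \<gamma>\<^sup>2 * \<rho>\<^sup>2 / 3" by simp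
  moreover have "0 < \<gamma>\<^sup>2 * \<rho>\<^sup>2" using assms(1,3) by simp
  ultimately show ?thesis using \<open>0 \<le> \<epsilon>\<close> by (simp add: algebra_simps)
qed

lemma abs_Min_diff_le:
  fixes f g :: "'i \<Rightarrow> real"
  assumes "finite I" "I \<noteq> {}" "\<And>i. i \<in> I \<Longrightarrow> \<bar>f i - g i\<bar> \<le> K"
  shows "\<bar>Min (f ` I) - Min (g ` I)\<bar> \<le> K"
proof -
  have "Min (f ` I) \<in> f ` I" "Min (g ` I) \<in> g ` I"
    using assms(1,2) by (intro Min_in; simp)+
  then obtain i j where ij: "i \<in> I" "Min (f ` I) = f i" "j \<in> I" "Min (g ` I) = g j"
    by auto
  have "Min (f ` I) \<le> f j" "Min (g ` I) \<le> g i"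
    using assms(1) ij(1,3) by simp_all
  then show ?thesis using assms(3)[OF ij(1)] assms(3)[OF ij(3)] ij(2,4) unfolding abs_le_iff by linarith
qed

lemma (in leaky_network) min_margin_lipschitz:
  "((\<Sum>j\<in>UNIV. \<bar>a j\<bar>) * (\<Sum>i\<in>UNIV. norm (x i)))-lipschitz_on UNIV (\<lambda>V. Min (range (\<lambda>i. margin \<gamma> a x y i V)))"
  unfolding lipschitz_on_def dist_real_def dist_norm
proof (intro conjI ballI)
  fix V V' :: "real^'d^'m"
  have "\<bar>margin \<gamma> a x y i V - margin \<gamma> a x y i V'\<bar>
      \<le> (\<Sum>j\<in>UNIV. \<bar>a j\<bar>) * (\<Sum>i\<in>UNIV. norm (x i)) * norm (V - V')" for i
  proof -
    have "norm (x i) \<le> (\<Sum>i\<in>UNIV. norm (x i))" by (rule member_le_sum) auto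
    then have "(\<Sum>j\<in>UNIV. \<bar>a j\<bar>) * norm (x i) * norm (V - V')
        \<le> (\<Sum>j\<in>UNIV. \<bar>a j\<bar>) * (\<Sum>i\<in>UNIV. norm (x i)) * norm (V - V')"
      by (intro mult_right_mono mult_left_mono sum_nonneg) auto
    with margin_lipschitz[of i V V'] show ?thesis by linarith
  qed
  then show "\<bar>Min (range (\<lambda>i. margin \<gamma> a x y i V)) - Min (range (\<lambda>i. margin \<gamma> a x y i V'))\<bar>
      \<le> (\<Sum>j\<in>UNIV. \<bar>a j\<bar>) * (\<Sum>i\<in>UNIV. norm (x i)) * norm (V - V')"
    by (intro abs_Min_diff_le) auto
qed (intro mult_nonneg_nonneg sum_nonneg; simp)

lemma emp_loss_lt_of_margins_gt:
  fixes x :: "'n::finite \<Rightarrow> real^'d"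
  assumes "\<And>q. lossf q \<le> exp (- q)"
    and "ln (real CARD('n)) - ln (ln 2) < Min (range (\<lambda>i. margin \<gamma> a x y i W))"
  shows "emp_loss lossf \<gamma> a x y W < ln 2 / real CARD('n)"
proof -
  define n where "n = real CARD('n)"
  have "n > 0" by (simp add: n_def)
  have margin_gt: "ln n - ln (ln 2) < margin \<gamma> a x y i W" for i
    using assms(2) Min_le[of "range (\<lambda>i. margin \<gamma> a x y i W)"] unfolding n_def
    by (meson finite UNIV_I finite_imageI image_eqI order.strict_trans2)
  have "exp (- margin \<gamma> a x y i W) < exp (ln (ln 2) - ln n)" for i
    using margin_gt[of i] by simp
  also have "exp (ln (ln 2) - ln n) = ln 2 / n"
    using \<open>n > 0\<close> by (simp add: exp_diff)
  finally have "lossf (margin \<gamma> a x y i W) < ln 2 / n" for i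
    using assms(1) order.strict_trans1 by blast
  then have "(\<Sum>i\<in>UNIV. lossf (margin \<gamma> a x y i W)) < (\<Sum>i\<in>(UNIV :: 'n set). ln 2 / n)"
    by (intro sum_strict_mono) auto
  then show ?thesis
    using \<open>n > 0\<close> unfolding emp_loss_eq_sum_margin n_def[symmetric] by (simp add: n_def divide_strict_right_mono)
qed

lemma unit_second_layer_sq_sum:
  fixes a :: "'m::finite \<Rightarrow> real"
  assumes "\<forall>j. a j = 1 / sqrt (real CARD('m)) \<or> a j = - 1 / sqrt (real CARD('m))"
  shows "(\<Sum>j\<in>UNIV. (a j)\<^sup>2) = 1"
proof -
  have "(a j)\<^sup>2 = 1 / (sqrt (real CARD('m)))\<^sup>2" for j
    using assms[rule_format, of j] by (auto simp: power_divide)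
  then show ?thesis by simp
qed

lemma abs_inner_le_Max_offdiag:
  fixes x :: "'n::finite \<Rightarrow> 'a::real_inner"
  defines "\<epsilon> \<equiv> Max ({0} \<union> {\<bar>x i \<bullet> x j\<bar> | i j. i \<noteq> j})"
  shows "0 \<le> \<epsilon>" "\<And>i k. i \<noteq> k \<Longrightarrow> \<bar>x i \<bullet> x k\<bar> \<le> \<epsilon>"
proof -
  have "{\<bar>x i \<bullet> x j\<bar> | i j. i \<noteq> j} \<subseteq> (\<lambda>(i, j). \<bar>x i \<bullet> x j\<bar>) ` UNIV" by auto
  then have fin: "finite ({0} \<union> {\<bar>x i \<bullet> x j\<bar> | i j. i \<noteq> j})"
    by (simp add: finite_subset)
  then show "0 \<le> \<epsilon>" unfolding \<epsilon>_def by simp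
  show "\<bar>x i \<bullet> x k\<bar> \<le> \<epsilon>" if "i \<noteq> k" for i k
    using fin that unfolding \<epsilon>_def by (intro Max_ge) auto
qed

lemma (in leaky_network) min_margin_abs_cont:
  assumes "gradient_flow L W" "T \<ge> 0"
  shows "abs_cont_on 0 T (\<lambda>\<tau>. Min (range (\<lambda>i. margin \<gamma> a x y i (W \<tau>))))"
proof (rule abs_cont_on_compose_lipschitz[OF _ min_margin_lipschitz])
  show "abs_cont_on 0 T W" using assms unfolding gradient_flow_def by blast
qed

lemma (in leaky_network_training) min_margin_lower_rate:
  assumes flow: "gradient_flow (emp_loss lossf \<gamma> a x y) W"
    and "\<And>i. \<rho> \<le> norm (x i)" "\<rho> \<ge> 0"
  shows "AE t in lborel. t \<ge> 0 \<longrightarrow> straddle_lower_deriv (\<lambda>\<tau>. Min (range (\<lambda>i. margin \<gamma> a x y i (W \<tau>)))) t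
     ((\<gamma>\<^sup>2 * \<rho>\<^sup>2 - (real CARD('n) - 1) * \<epsilon>) / real CARD('n) * h (Min (range (\<lambda>i. margin \<gamma> a x y i (W t)))))"
  using conjunct2[OF flow[unfolded gradient_flow_def]]
proof eventually_elim
  case (elim t)
  show ?case
  proof
    assume "t \<ge> 0"
    then obtain V where "(W has_vector_derivative V) (at t)" "- V \<in> clarke_subdiff (emp_loss lossf \<gamma> a x y) (W t)"
      using elim by blast
    then show "straddle_lower_deriv (\<lambda>\<tau>. Min (range (\<lambda>i. margin \<gamma> a x y i (W \<tau>)))) t
     ((\<gamma>\<^sup>2 * \<rho>\<^sup>2 - (real CARD('n) - 1) * \<epsilon>) / real CARD('n) * h (Min (range (\<lambda>i. margin \<gamma> a x y i (W t)))))"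
      by (rule min_margin_straddle_lower_deriv) (use assms(2,3) in auto)
  qed
qed

theorem mainTheorem3:
  fixes \<gamma> :: real
    and a :: "'m::finite \<Rightarrow> real"
    and x :: "'n::finite \<Rightarrow> real^'d"
    and y :: "'n \<Rightarrow> real"
    and lossf :: "real \<Rightarrow> real"
    and W :: "real \<Rightarrow> real^'d^'m"
  assumes gamma: "0 < \<gamma>" "\<gamma> < 1"
    and a_vals: "\<forall>j. a j = 1 / sqrt (real CARD('m)) \<or> a j = - 1 / sqrt (real CARD('m))"
    and a_pos: "\<exists>j. a j = 1 / sqrt (real CARD('m))"
    and a_neg: "\<exists>j. a j = - 1 / sqrt (real CARD('m))"
    and y_vals: "\<forall>i. y i = 1 \<or> y i = - 1"
    and x_nz: "\<forall>i. x i \<noteq> 0"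
    and sep: "(Min (range (\<lambda>i. norm (x i))))\<^sup>2 \<ge>
               3 * \<gamma> powr (-3)
               * (Max (range (\<lambda>i. norm (x i))) / Min (range (\<lambda>i. norm (x i))))\<^sup>2
               * real CARD('n)
               * Max ({0} \<union> {\<bar>x i \<bullet> x j\<bar> | i j. i \<noteq> j})"
    and loss: "lossf = (\<lambda>q. exp (- q)) \<or> lossf = (\<lambda>q. ln (1 + exp (- q)))"
    and flow: "gradient_flow (emp_loss lossf \<gamma> a x y) W"
  shows "\<exists>t0. \<forall>t\<ge>t0. emp_loss lossf \<gamma> a x y (W t) < ln 2 / real CARD('n)"
proof -
  obtain h where h: "\<And>q. (lossf has_real_derivative - h q) (at q)" "\<And>q. h q > 0"
    "\<And>p q. p \<le> q \<Longrightarrow> h q \<le> h p" "\<And>q. isCont h q" "\<And>q. lossf q \<le> exp (- q)"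
    using exponential_or_logistic_loss[OF loss] by blast
  define \<epsilon> where "\<epsilon> = Max ({0} \<union> {\<bar>x i \<bullet> x j\<bar> | i j. i \<noteq> j})"
  define \<rho> where "\<rho> = Min (range (\<lambda>i. norm (x i)))"
  interpret leaky_network_training \<gamma> a x y lossf h \<epsilon>
    by unfold_locales (use gamma y_vals h abs_inner_le_Max_offdiag[where x = x]
      unit_second_layer_sq_sum[OF a_vals] in \<open>auto simp: \<epsilon>_def\<close>)
  have \<rho>: "\<rho> > 0" "\<And>i. \<rho> \<le> norm (x i)" "\<rho> \<le> Max (range (\<lambda>i. norm (x i)))"
    using x_nz Min_in[of "range (\<lambda>i. norm (x i))"] unfolding \<rho>_def by auto
  then have "(real CARD('n) - 1) * \<epsilon> < \<gamma>\<^sup>2 * \<rho>\<^sup>2"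
    using separation_rate_pos[OF gamma(1) _ _ _ eps_nonneg _ sep[folded \<epsilon>_def \<rho>_def]] gamma(2) by simp
  then have "(\<gamma>\<^sup>2 * \<rho>\<^sup>2 - (real CARD('n) - 1) * \<epsilon>) / real CARD('n) > 0" by simp
  from eventually_gt_of_lower_rate[OF min_margin_abs_cont[OF flow] this h(2,3)
      min_margin_lower_rate[OF flow \<rho>(2) less_imp_le[OF \<rho>(1)]]]
  obtain T where "\<forall>t\<ge>T. ln (real CARD('n)) - ln (ln 2) < Min (range (\<lambda>i. margin \<gamma> a x y i (W t)))"
    by blast
  then show ?thesis
    using emp_loss_lt_of_margins_gt[OF h(5)] by blast
qed

end
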